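(* Let $\mathcal R$ be a left-linear TRS which is terminating modulo $\mathcal B$. Then $\mathcal R$ is Church–Rosser modulo $\mathcal B$ if and only if $\mathrm{PCP}(\mathcal R)\cup\mathrm{PCP}^\pm(\mathcal R,\mathcal B^\pm)\subseteq\ \downarrow^\sim_{\mathcal R}$.
   Context: Terms are built from a signature $\mathcal F$ and variables $\mathcal V$. A rule $\ell\to r$ is a pair of terms with $\ell\notin\mathcal V$ and $\mathrm{Var}(r)\subseteq\mathrm{Var}(\ell)$; a TRS is a set of rules, an ES a set of equations; a TRS is left-linear if no left-hand side contains a variable twice. For a set $\mathcal E$ of pairs of terms, $s\to_{\mathcal E}t$ iff $s|_p=\ell\sigma$ and $t=s[r\sigma]_p$ for some $(\ell,r)\in\mathcal E$, position $p$ and substitution $\sigma$; $\leftarrow_{\mathcal E}$ is its inverse. $\mathcal B$ is a fixed ES with $\mathrm{Var}(\ell)=\mathrm{Var}(r)$ for all $\ell\approx r\in\mathcal B$; $\sim_{\mathcal B}=\leftrightarrow^*_{\mathcal B}$ and $\mathcal B^\pm=\mathcal B\cup\{t\approx s\mid s\approx t\in\mathcal B\}$. For a TRS $\mathcal R$: $\to_{\mathcal R/\mathcal B}=\sim_{\mathcal B}\cdot\to_{\mathcal R}\cdot\sim_{\mathcal B}$; $s\downarrow^\sim_{\mathcal R}t$ iff $s\to^*_{\mathcal R}\cdot\sim_{\mathcal B}\cdot\leftarrow^*_{\mathcal R}t$. $\mathcal R$ is terminating modulo $\mathcal B$ if there is no infinite $\to_{\mathcal R/\mathcal B}$-sequence,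 and Church–Rosser modulo $\mathcal B$ if $\leftrightarrow^*_{\mathcal R\cup\mathcal B}\subseteq\ \downarrow^\sim_{\mathcal R}$. Critical pairs: for sets of oriented pairs $\mathcal R_1,\mathcal R_2$ (equations of $\mathcal B^\pm$ read as oriented pairs), an overlap is $\langle\ell_1\to r_1,p,\ell_2\to r_2\rangle$ with $\ell_i\to r_i$ variants of elements of $\mathcal R_i$ without common variables, $p$ a non-variable position of $\ell_2$, $\ell_1$ and $\ell_2|_p$ unifiable, and the two rules not variants of each other if $p=\epsilon$. With an mgu $\sigma$ this yields the critical peak $\ell_2\sigma[r_1\sigma]_p\leftarrow^p\ell_2\sigma\to^\epsilon r_2\sigma$ and critical pair $\ell_2\sigma[r_1\sigma]_p\approx r_2\sigma$. A critical peak $t\leftarrow^p s\to^\epsilon u$ is prime if all proper subterms of $s|_p$ are normal forms of $\to_{\mathcal R}$ (irreducibility is always checked w.r.t. $\mathcal R$, also for overlaps involving $\mathcal B^\pm$). $\mathrm{PCP}(\mathcal R)$ is the set of prime critical pairs from overlaps of $\mathcal R$ with itself; $\mathrm{PCP}^\pm(\mathcal R,\mathcal B^\pm)$ is the set of prime critical pairs from overlaps $\langle\rho_1,p,\rho_2\rangle$ with $\rho_1\in\mathcal R,\rho_2\in\mathcal B^\pm$ or $\rho_1\in\mathcal B^\pm,\rho_2\in\mathcal R$. The inclusion of a set of equations in a relation means each $s\approx t$ in the set satisfies $s\downarrow^\sim_{\mathcal R}t$. *)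

theory Defs
  imports Main
begin

datatype ('f, 'v) "term" = Var 'v | Fun 'f "('f, 'v) term list"

type_synonym ('f, 'v) rule = "('f, 'v) term \<times> ('f, 'v) term"
type_synonym ('f, 'v) subst = "'v \<Rightarrow> ('f, 'v) term"
type_synonym pos = "nat list"

fun subst_apply :: "('f, 'v) term \<Rightarrow> ('f, 'v) subst \<Rightarrow> ('f, 'v) term" (infixl "\<cdot>" 67) where
  "Var x \<cdot> \<sigma> = \<sigma> x"
| "Fun f ts \<cdot> \<sigma> = Fun f (map (\<lambda>t. t \<cdot> \<sigma>) ts)"

fun vars_term :: "('f, 'v) term \<Rightarrow> 'v set" where
  "vars_term (Var x) = {x}"
| "vars_term (Fun f ts) = (\<Union>t \<in> set ts. vars_term t)"

fun vars_term_list :: "('f, 'v) term \<Rightarrow> 'v list" where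
  "vars_term_list (Var x) = [x]"
| "vars_term_list (Fun f ts) = concat (map vars_term_list ts)"

definition linear_term :: "('f, 'v) term \<Rightarrow> bool" where
  "linear_term t \<longleftrightarrow> distinct (vars_term_list t)"

definition vars_rule :: "('f, 'v) rule \<Rightarrow> 'v set" where
  "vars_rule \<rho> = vars_term (fst \<rho>) \<union> vars_term (snd \<rho>)"

lemma size_nth_less_term [termination_simp]:
  "i < length ts \<Longrightarrow> size (ts ! i) < Suc (size_list size ts)"
  by (metis less_Suc_eq_le nth_mem order.refl size_list_estimation')

fun poss :: "('f, 'v) term \<Rightarrow> pos set" where
  "poss (Var x) = {[]}"
| "poss (Fun f ts) = insert [] (\<Union>i \<in> {..<length ts}. (\<lambda>p. i # p) ` poss (ts ! i))"

fun subt_at :: "('f, 'v) term \<Rightarrow> pos \<Rightarrow> ('f, 'v) term" (infixl "|'_" 67) where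
  "subt_at t [] = t"
| "subt_at (Var x) (i # p) = Var x"
| "subt_at (Fun f ts) (i # p) = (if i < length ts then subt_at (ts ! i) p else Fun f ts)"

definition fun_poss :: "('f, 'v) term \<Rightarrow> pos set" where
  "fun_poss t = {p \<in> poss t. \<forall>x. subt_at t p \<noteq> Var x}"

fun replace_at :: "('f, 'v) term \<Rightarrow> pos \<Rightarrow> ('f, 'v) term \<Rightarrow> ('f, 'v) term" where
  "replace_at t [] s = s"
| "replace_at (Var x) (i # p) s = Var x"
| "replace_at (Fun f ts) (i # p) s =
     (if i < length ts then Fun f (ts[i := replace_at (ts ! i) p s]) else Fun f ts)"

definition rstep :: "('f, 'v) rule set \<Rightarrow> (('f, 'v) term \<times> ('f, 'v) term) set" where
  "rstep E = {(s, t). \<exists>l r p \<sigma>. (l, r) \<in> E \<and> p \<in> poss s \<and> subt_at s p = l \<cdot> \<sigma>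
                          \<and> t = replace_at s p (r \<cdot> \<sigma>)}"

definition NF :: "('f, 'v) rule set \<Rightarrow> ('f, 'v) term \<Rightarrow> bool" where
  "NF R t \<longleftrightarrow> (\<nexists>u. (t, u) \<in> rstep R)"

definition wf_trs :: "('f, 'v) rule set \<Rightarrow> bool" where
  "wf_trs R \<longleftrightarrow> (\<forall>(l, r) \<in> R. (\<forall>x. l \<noteq> Var x) \<and> vars_term r \<subseteq> vars_term l)"

definition left_linear :: "('f, 'v) rule set \<Rightarrow> bool" where
  "left_linear R \<longleftrightarrow> (\<forall>(l, r) \<in> R. linear_term l)"

definition var_preserving :: "('f, 'v) rule set \<Rightarrow> bool" where
  "var_preserving B \<longleftrightarrow> (\<forall>(l, r) \<in> B. vars_term l = vars_term r)"

definition Bpm :: "('f, 'v) rule set \<Rightarrow> ('f, 'v) rule set" where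
  "Bpm B = B \<union> {(t, s) | s t. (s, t) \<in> B}"

definition conv :: "('f, 'v) rule set \<Rightarrow> (('f, 'v) term \<times> ('f, 'v) term) set" where
  "conv E = (rstep E \<union> (rstep E)\<inverse>)\<^sup>*"

definition simB :: "('f, 'v) rule set \<Rightarrow> (('f, 'v) term \<times> ('f, 'v) term) set" where
  "simB B = conv B"

definition relmod :: "('f, 'v) rule set \<Rightarrow> ('f, 'v) rule set \<Rightarrow> (('f, 'v) term \<times> ('f, 'v) term) set" where
  "relmod R B = simB B O rstep R O simB B"

definition join_mod :: "('f, 'v) rule set \<Rightarrow> ('f, 'v) rule set \<Rightarrow> (('f, 'v) term \<times> ('f, 'v) term) set" where
  "join_mod R B = (rstep R)\<^sup>* O simB B O ((rstep R)\<^sup>*)\<inverse>"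

definition terminating_mod :: "('f, 'v) rule set \<Rightarrow> ('f, 'v) rule set \<Rightarrow> bool" where
  "terminating_mod R B \<longleftrightarrow> (\<nexists>f. \<forall>i. (f i, f (Suc i)) \<in> relmod R B)"

definition CR_mod :: "('f, 'v) rule set \<Rightarrow> ('f, 'v) rule set \<Rightarrow> bool" where
  "CR_mod R B \<longleftrightarrow> conv (R \<union> B) \<subseteq> join_mod R B"

definition rename_rule :: "('v \<Rightarrow> 'v) \<Rightarrow> ('f, 'v) rule \<Rightarrow> ('f, 'v) rule" where
  "rename_rule \<pi> \<rho> = (fst \<rho> \<cdot> (Var \<circ> \<pi>), snd \<rho> \<cdot> (Var \<circ> \<pi>))"

definition variant_of :: "('f, 'v) rule \<Rightarrow> ('f, 'v) rule \<Rightarrow> bool" where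
  "variant_of \<rho> \<rho>' \<longleftrightarrow> (\<exists>\<pi>. bij \<pi> \<and> \<rho> = rename_rule \<pi> \<rho>')"

definition unifiable :: "('f, 'v) term \<Rightarrow> ('f, 'v) term \<Rightarrow> bool" where
  "unifiable s t \<longleftrightarrow> (\<exists>\<sigma>. s \<cdot> \<sigma> = t \<cdot> \<sigma>)"

definition is_mgu :: "('f, 'v) subst \<Rightarrow> ('f, 'v) term \<Rightarrow> ('f, 'v) term \<Rightarrow> bool" where
  "is_mgu \<sigma> s t \<longleftrightarrow> s \<cdot> \<sigma> = t \<cdot> \<sigma> \<and>
     (\<forall>\<tau>. s \<cdot> \<tau> = t \<cdot> \<tau> \<longrightarrow> (\<exists>\<delta>. \<forall>x. \<tau> x = \<sigma> x \<cdot> \<delta>))"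

definition overlap :: "('f, 'v) rule set \<Rightarrow> ('f, 'v) rule set \<Rightarrow>
    ('f, 'v) rule \<Rightarrow> pos \<Rightarrow> ('f, 'v) rule \<Rightarrow> bool" where
  "overlap R1 R2 \<rho>1 p \<rho>2 \<longleftrightarrow>
     (\<exists>\<rho>\<in>R1. variant_of \<rho>1 \<rho>) \<and> (\<exists>\<rho>\<in>R2. variant_of \<rho>2 \<rho>) \<and>
     vars_rule \<rho>1 \<inter> vars_rule \<rho>2 = {} \<and>
     p \<in> fun_poss (fst \<rho>2) \<and>
     unifiable (fst \<rho>1) (subt_at (fst \<rho>2) p) \<and>
     (p = [] \<longrightarrow> \<not> variant_of \<rho>1 \<rho>2)"

definition pcp_gen :: "('f, 'v) rule set \<Rightarrow> ('f, 'v) rule set \<Rightarrow> ('f, 'v) rule set \<Rightarrow>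
    (('f, 'v) term \<times> ('f, 'v) term) set" where
  "pcp_gen R1 R2 R = {(replace_at (fst \<rho>2 \<cdot> \<sigma>) p (snd \<rho>1 \<cdot> \<sigma>), snd \<rho>2 \<cdot> \<sigma>) | \<rho>1 p \<rho>2 \<sigma>.
      overlap R1 R2 \<rho>1 p \<rho>2 \<and> is_mgu \<sigma> (fst \<rho>1) (subt_at (fst \<rho>2) p) \<and>
      (\<forall>q \<in> poss (subt_at (fst \<rho>2 \<cdot> \<sigma>) p). q \<noteq> [] \<longrightarrow>
          NF R (subt_at (subt_at (fst \<rho>2 \<cdot> \<sigma>) p) q))}"

definition PCP :: "('f, 'v) rule set \<Rightarrow> (('f, 'v) term \<times> ('f, 'v) term) set" where
  "PCP R = pcp_gen R R R"

definition PCPpm :: "('f, 'v) rule set \<Rightarrow> ('f, 'v) rule set \<Rightarrow> (('f, 'v) term \<times> ('f, 'v) term) set" where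
  "PCPpm R Bp = pcp_gen R Bp R \<union> pcp_gen Bp R R"

end

theory Submission
  imports Defs
begin

text \<open>
  Every prime critical pair is a peak of R- and B-steps, so Church--Rosser modulo B makes it
  joinable. Conversely, one shows by well-founded induction along the (terminating) relation
  R/B that each term s has B-unique normal forms: normal forms of any two terms in the B-class
  of s are B-equivalent. Below s this is the induction hypothesis, and it suffices to resolve
  the local peaks \<open>t \<leftarrow>\<^sub>R w \<rightarrow>\<^sub>R u\<close> and
  \<open>t \<leftarrow>\<^sub>R w \<leftrightarrow>\<^sub>B u\<close> with w in the class of s.
  This is done by a second induction on the size of the inner redex of a nested peak. Parallel
  peaks commute. A step below a variable of the outer left-hand side is repeated at all
  occurrences of that variable; left-linearity of R is needed only when the inner step is a
  B-step. A critical overlap whose inner redex has normal-form proper subterms is an instance of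
  a prime critical pair, hence joinable; otherwise a redex strictly inside the inner redex splits
  the peak into two peaks of smaller measure.
\<close>

subsection \<open>Substitutions and positions\<close>

lemma subst_Var [simp]: "t \<cdot> Var = t"
  by (induction t) (auto simp: map_idI)

lemma subst_subst: "t \<cdot> \<sigma> \<cdot> \<tau> = t \<cdot> (\<lambda>x. \<sigma> x \<cdot> \<tau>)"
  by (induction t) auto

lemma term_subst_eq: "(\<And>x. x \<in> vars_term t \<Longrightarrow> \<sigma> x = \<tau> x) \<Longrightarrow> t \<cdot> \<sigma> = t \<cdot> \<tau>"
  by (induction t) auto

lemma term_subst_eq_rev: "t \<cdot> \<sigma> = t \<cdot> \<tau> \<Longrightarrow> x \<in> vars_term t \<Longrightarrow> \<sigma> x = \<tau> x"
  by (induction t) (auto simp: map_eq_conv)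

lemma vars_term_subst: "vars_term (t \<cdot> \<sigma>) = (\<Union>x \<in> vars_term t. vars_term (\<sigma> x))"
  by (induction t) auto

lemma set_vars_term_list [simp]: "set (vars_term_list t) = vars_term t"
  by (induction t) auto

lemma finite_vars_term [simp]: "finite (vars_term t)"
  by (induction t) auto

lemma size_subst_le: "x \<in> vars_term t \<Longrightarrow> size (\<sigma> x) \<le> size (t \<cdot> \<sigma>)"
proof (induction t)
  case (Fun f ts)
  then obtain u where "u \<in> set ts" "x \<in> vars_term u" by auto
  with Fun.IH have "size (\<sigma> x) \<le> size (u \<cdot> \<sigma>)" by blast
  also have "size (u \<cdot> \<sigma>) < size (Fun f ts \<cdot> \<sigma>)"
    using \<open>u \<in> set ts\<close> by (simp add: size_list_estimation' less_Suc_eq_le)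
  finally show ?case by simp
qed simp

lemma occurs_check: "\<sigma> x = t \<cdot> \<sigma> \<Longrightarrow> t \<noteq> Var x \<Longrightarrow> x \<notin> vars_term t"
proof
  assume "\<sigma> x = t \<cdot> \<sigma>" "t \<noteq> Var x" "x \<in> vars_term t"
  then obtain f ts u where "t = Fun f ts" "u \<in> set ts" "x \<in> vars_term u"
    by (cases t) auto
  then have "size (\<sigma> x) < size (t \<cdot> \<sigma>)"
    using size_subst_le[of x u \<sigma>] by (simp add: size_list_estimation' less_Suc_eq_le)
  with \<open>\<sigma> x = t \<cdot> \<sigma>\<close> show False by simp
qed

lemma Nil_in_poss [simp]: "[] \<in> poss t"
  by (cases t) auto

lemma Cons_in_poss_Fun [simp]: "i # p \<in> poss (Fun f ts) \<longleftrightarrow> i < length ts \<and> p \<in> poss (ts ! i)"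
  by auto

declare poss.simps(2) [simp del]

lemma poss_append_poss: "p @ q \<in> poss t \<longleftrightarrow> p \<in> poss t \<and> q \<in> poss (t |_ p)"
  by (induction t p rule: subt_at.induct) auto

lemma subt_at_append: "p \<in> poss t \<Longrightarrow> t |_ (p @ q) = t |_ p |_ q"
  by (induction t p rule: subt_at.induct) auto

lemma replace_at_subt_at [simp]: "p \<in> poss t \<Longrightarrow> replace_at t p s |_ p = s"
  by (induction t p rule: subt_at.induct) auto

lemma replace_at_poss [simp]: "p \<in> poss t \<Longrightarrow> p \<in> poss (replace_at t p s)"
  by (induction t p rule: subt_at.induct) auto

lemma replace_at_ident [simp]: "p \<in> poss t \<Longrightarrow> replace_at t p (t |_ p) = t"
  by (induction t p rule: subt_at.induct) auto

lemma replace_at_replace_at [simp]: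
  "p \<in> poss t \<Longrightarrow> replace_at (replace_at t p s) p s' = replace_at t p s'"
  by (induction t p rule: subt_at.induct) auto

lemma replace_at_append:
  "p \<in> poss t \<Longrightarrow> replace_at t (p @ q) s = replace_at t p (replace_at (t |_ p) q s)"
  by (induction t p rule: subt_at.induct) auto

lemma size_subt_at_less: "q \<in> poss t \<Longrightarrow> q \<noteq> [] \<Longrightarrow> size (t |_ q) < size t"
proof (induction t arbitrary: q)
  case (Fun f ts)
  then obtain i q' where q: "q = i # q'" "i < length ts" "q' \<in> poss (ts ! i)"
    by (cases q) auto
  have "size (ts ! i |_ q') \<le> size (ts ! i)"
    using Fun.IH[of "ts ! i" q'] q by (cases "q' = []") auto
  also have "size (ts ! i) < size (Fun f ts)"
    using q(2) by (simp add: size_list_estimation'[OF nth_mem[OF q(2)]] less_Suc_eq_le)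
  finally show ?case using q by simp
qed auto

lemma poss_subst: "p \<in> poss t \<Longrightarrow> p \<in> poss (t \<cdot> \<sigma>)"
  by (induction t p rule: subt_at.induct) auto

lemma subt_at_subst: "p \<in> poss t \<Longrightarrow> t \<cdot> \<sigma> |_ p = t |_ p \<cdot> \<sigma>"
  by (induction t p rule: subt_at.induct) auto

lemma replace_at_subst:
  "p \<in> poss t \<Longrightarrow> replace_at t p s \<cdot> \<sigma> = replace_at (t \<cdot> \<sigma>) p (s \<cdot> \<sigma>)"
  by (induction t p rule: subt_at.induct) (auto simp: map_update)

lemma fun_poss_imp_poss: "p \<in> fun_poss t \<Longrightarrow> p \<in> poss t"
  by (simp add: fun_poss_def)

lemma var_poss_imp_vars_term: "p \<in> poss t \<Longrightarrow> t |_ p = Var x \<Longrightarrow> x \<in> vars_term t"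
  by (induction t p rule: subt_at.induct) auto

lemma poss_subst_not_fun_poss:
  "p \<in> poss (t \<cdot> \<sigma>) \<Longrightarrow> p \<notin> fun_poss t \<Longrightarrow>
    \<exists>p1 p2 x. p = p1 @ p2 \<and> p1 \<in> poss t \<and> t |_ p1 = Var x \<and> p2 \<in> poss (\<sigma> x)"
proof (induction t arbitrary: p)
  case (Fun f ts)
  then obtain i p' where p: "p = i # p'" "i < length ts" "p' \<in> poss (ts ! i \<cdot> \<sigma>)"
    by (cases p) (auto simp: fun_poss_def)
  moreover have "p' \<notin> fun_poss (ts ! i)"
    using Fun.prems p by (auto simp: fun_poss_def)
  ultimately obtain p1 p2 x where
    "p' = p1 @ p2" "p1 \<in> poss (ts ! i)" "ts ! i |_ p1 = Var x" "p2 \<in> poss (\<sigma> x)"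
    using Fun.IH[of "ts ! i" p'] by auto
  with p show ?case by (intro exI[of _ "i # p1"] exI[of _ p2]) auto
qed auto

definition parallel_pos :: "pos \<Rightarrow> pos \<Rightarrow> bool" where
  "parallel_pos p q \<longleftrightarrow> (\<nexists>r. q = p @ r) \<and> (\<nexists>r. p = q @ r)"

lemma parallel_pos_sym: "parallel_pos p q \<Longrightarrow> parallel_pos q p"
  unfolding parallel_pos_def by auto

lemma parallel_replace_at:
  "parallel_pos p q \<Longrightarrow> p \<in> poss t \<Longrightarrow> q \<in> poss t \<Longrightarrow>
     q \<in> poss (replace_at t p s) \<and> replace_at t p s |_ q = t |_ q \<and>
     replace_at (replace_at t p s) q u = replace_at (replace_at t q u) p s"
proof (induction t arbitrary: p q)
  case (Var x)
  then show ?case by (cases p; cases q) (auto simp: parallel_pos_def)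
next
  case (Fun f ts)
  then obtain i p' j q' where pq: "p = i # p'" "q = j # q'"
    by (cases p; cases q) (auto simp: parallel_pos_def)
  show ?case
  proof (cases "i = j")
    case True
    with Fun.prems pq have "parallel_pos p' q'" "p' \<in> poss (ts ! i)" "q' \<in> poss (ts ! i)"
      by (auto simp: parallel_pos_def)
    with Fun.IH[of "ts ! i" p' q'] Fun.prems True pq show ?thesis by auto
  next
    case False
    with Fun.prems pq show ?thesis by (auto simp: list_update_swap)
  qed
qed

subsection \<open>Rewrite steps at a position and closure properties\<close>

definition rstep_at :: "('f, 'v) rule set \<Rightarrow> pos \<Rightarrow> (('f, 'v) term \<times> ('f, 'v) term) set" where
  "rstep_at E p = {(s, t). \<exists>l r \<sigma>. (l, r) \<in> E \<and> p \<in> poss s \<and> s |_ p = l \<cdot> \<sigma> \<and>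
     t = replace_at s p (r \<cdot> \<sigma>)}"

lemma rstep_iff_rstep_at: "(s, t) \<in> rstep E \<longleftrightarrow> (\<exists>p. (s, t) \<in> rstep_at E p)"
  unfolding rstep_def rstep_at_def by blast

lemma rstep_at_imp_poss: "(s, t) \<in> rstep_at E p \<Longrightarrow> p \<in> poss s"
  unfolding rstep_at_def by blast

lemma rstep_at_root: "(l, r) \<in> E \<Longrightarrow> (l \<cdot> \<sigma>, r \<cdot> \<sigma>) \<in> rstep_at E []"
  unfolding rstep_at_def by auto

lemma rstep_at_converse: "rstep_at (E\<inverse>) p = (rstep_at E p)\<inverse>"
proof -
  have "(t, s) \<in> rstep_at (E\<inverse>) p" if "(s, t) \<in> rstep_at E p" for s t E
  proof -
    from that obtain l r \<sigma> where
      "(l, r) \<in> E" "p \<in> poss s" "s |_ p = l \<cdot> \<sigma>" "t = replace_at s p (r \<cdot> \<sigma>)"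
      unfolding rstep_at_def by blast
    then have "(r, l) \<in> E\<inverse>" "p \<in> poss t" "t |_ p = r \<cdot> \<sigma>" "s = replace_at t p (l \<cdot> \<sigma>)"
      by (auto, metis replace_at_ident replace_at_replace_at)
    then show ?thesis unfolding rstep_at_def by blast
  qed
  from this[of _ _ E] this[of _ _ "E\<inverse>"] show ?thesis by auto
qed

lemma rstep_union: "rstep (E \<union> F) = rstep E \<union> rstep F"
  unfolding rstep_def by blast

lemma rstep_converse: "rstep (E\<inverse>) = (rstep E)\<inverse>"
  by (auto simp: rstep_iff_rstep_at rstep_at_converse)

lemma Bpm_eq: "Bpm B = B \<union> B\<inverse>"
  unfolding Bpm_def by auto

lemma rstep_Bpm: "rstep (Bpm B) = rstep B \<union> (rstep B)\<inverse>"
  by (simp add: Bpm_eq rstep_union rstep_converse)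

lemma conv_eq_rtrancl_rstep_Bpm: "conv B = (rstep (Bpm B))\<^sup>*"
  by (simp add: conv_def rstep_Bpm)

lemma rstep_at_ctxt:
  assumes "(s, t) \<in> rstep_at E p" "q \<in> poss C"
  shows "(replace_at C q s, replace_at C q t) \<in> rstep_at E (q @ p)"
proof -
  from assms(1) obtain l r \<sigma> where
    "(l, r) \<in> E" "p \<in> poss s" "s |_ p = l \<cdot> \<sigma>" "t = replace_at s p (r \<cdot> \<sigma>)"
    unfolding rstep_at_def by blast
  moreover have "q @ p \<in> poss (replace_at C q s)" "replace_at C q s |_ (q @ p) = l \<cdot> \<sigma>"
    "replace_at C q t = replace_at (replace_at C q s) (q @ p) (r \<cdot> \<sigma>)"
    using assms(2) calculation by (simp_all add: poss_append_poss subt_at_append replace_at_append)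
  ultimately show ?thesis unfolding rstep_at_def by blast
qed

lemma rstep_at_subst:
  assumes "(s, t) \<in> rstep_at E p"
  shows "(s \<cdot> \<tau>, t \<cdot> \<tau>) \<in> rstep_at E p"
proof -
  from assms obtain l r \<sigma> where
    "(l, r) \<in> E" "p \<in> poss s" "s |_ p = l \<cdot> \<sigma>" "t = replace_at s p (r \<cdot> \<sigma>)"
    unfolding rstep_at_def by blast
  moreover have "p \<in> poss (s \<cdot> \<tau>)" "s \<cdot> \<tau> |_ p = l \<cdot> (\<lambda>x. \<sigma> x \<cdot> \<tau>)"
    "t \<cdot> \<tau> = replace_at (s \<cdot> \<tau>) p (r \<cdot> (\<lambda>x. \<sigma> x \<cdot> \<tau>))"
    using calculation by (simp_all add: poss_subst subt_at_subst replace_at_subst subst_subst)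
  ultimately show ?thesis unfolding rstep_at_def by blast
qed

definition ctxt_closed :: "(('f, 'v) term \<times> ('f, 'v) term) set \<Rightarrow> bool" where
  "ctxt_closed S \<longleftrightarrow>
     (\<forall>s t C q. (s, t) \<in> S \<longrightarrow> q \<in> poss C \<longrightarrow> (replace_at C q s, replace_at C q t) \<in> S)"

definition subst_closed :: "(('f, 'v) term \<times> ('f, 'v) term) set \<Rightarrow> bool" where
  "subst_closed S \<longleftrightarrow> (\<forall>s t \<tau>. (s, t) \<in> S \<longrightarrow> (s \<cdot> \<tau>, t \<cdot> \<tau>) \<in> S)"

lemma ctxt_closed_rstep: "ctxt_closed (rstep E)"
  unfolding ctxt_closed_def by (meson rstep_at_ctxt rstep_iff_rstep_at)

lemma subst_closed_rstep: "subst_closed (rstep E)"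
  unfolding subst_closed_def by (meson rstep_at_subst rstep_iff_rstep_at)

lemma ctxt_closed_Un: "ctxt_closed S \<Longrightarrow> ctxt_closed T \<Longrightarrow> ctxt_closed (S \<union> T)"
  unfolding ctxt_closed_def by blast

lemma ctxt_closed_converse: "ctxt_closed S \<Longrightarrow> ctxt_closed (S\<inverse>)"
  unfolding ctxt_closed_def by blast

lemma ctxt_closed_rtrancl: "ctxt_closed S \<Longrightarrow> ctxt_closed (S\<^sup>*)"
  unfolding ctxt_closed_def
  by (clarify, erule rtrancl_induct) (simp, meson rtrancl_into_rtrancl)

lemma subst_closed_Un: "subst_closed S \<Longrightarrow> subst_closed T \<Longrightarrow> subst_closed (S \<union> T)"
  unfolding subst_closed_def by blast

lemma subst_closed_converse: "subst_closed S \<Longrightarrow> subst_closed (S\<inverse>)"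
  unfolding subst_closed_def by blast

lemma subst_closed_rtrancl: "subst_closed S \<Longrightarrow> subst_closed (S\<^sup>*)"
  unfolding subst_closed_def
  by (clarify, erule rtrancl_induct) (simp, meson rtrancl_into_rtrancl)

lemma ctxt_closed_conv: "ctxt_closed (conv E)"
  unfolding conv_def
  by (intro ctxt_closed_rtrancl ctxt_closed_Un ctxt_closed_converse ctxt_closed_rstep)

lemma subst_closed_conv: "subst_closed (conv E)"
  unfolding conv_def
  by (intro subst_closed_rtrancl subst_closed_Un subst_closed_converse subst_closed_rstep)

lemma ctxt_closed_rsteps: "ctxt_closed ((rstep E)\<^sup>*)"
  by (intro ctxt_closed_rtrancl ctxt_closed_rstep)

lemma subst_closed_rsteps: "subst_closed ((rstep E)\<^sup>*)"
  by (intro subst_closed_rtrancl subst_closed_rstep)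

lemma rtrancl_Fun_arg:
  assumes "ctxt_closed S" "(a, b) \<in> S\<^sup>*"
  shows "(Fun f (xs @ a # ys), Fun f (xs @ b # ys)) \<in> S\<^sup>*"
proof -
  have "[length xs] \<in> poss (Fun f (xs @ a # ys))" by simp
  with ctxt_closed_rtrancl[OF assms(1)] assms(2) show ?thesis
    unfolding ctxt_closed_def by fastforce
qed

lemma rtrancl_Fun_args:
  assumes "ctxt_closed S"
  shows "length ts = length us \<Longrightarrow> \<forall>i < length ts. (ts ! i, us ! i) \<in> S\<^sup>* \<Longrightarrow>
    (Fun f (xs @ ts), Fun f (xs @ us)) \<in> S\<^sup>*"
proof (induction ts arbitrary: us xs)
  case (Cons a ts)
  then obtain b us' where us: "us = b # us'" by (cases us) auto
  with Cons.prems have "(a, b) \<in> S\<^sup>*" by fastforce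
  then have "(Fun f (xs @ a # ts), Fun f (xs @ b # ts)) \<in> S\<^sup>*"
    by (rule rtrancl_Fun_arg[OF assms])
  moreover have "(Fun f ((xs @ [b]) @ ts), Fun f ((xs @ [b]) @ us')) \<in> S\<^sup>*"
    using Cons.IH[of us' "xs @ [b]"] Cons.prems us by fastforce
  ultimately show ?case using us by simp
qed simp

lemma rtrancl_subst:
  assumes "ctxt_closed S" "\<And>x. x \<in> vars_term t \<Longrightarrow> (\<sigma> x, \<tau> x) \<in> S\<^sup>*"
  shows "(t \<cdot> \<sigma>, t \<cdot> \<tau>) \<in> S\<^sup>*"
  using assms(2)
proof (induction t)
  case (Fun f ts)
  then have "\<forall>i < length ts. (ts ! i \<cdot> \<sigma>, ts ! i \<cdot> \<tau>) \<in> S\<^sup>*"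
    by (metis UN_I nth_mem vars_term.simps(2))
  then show ?case
    using rtrancl_Fun_args[OF assms(1), of "map (\<lambda>t. t \<cdot> \<sigma>) ts" "map (\<lambda>t. t \<cdot> \<tau>) ts" f "[]"]
    by simp
qed simp

lemma conv_refl [simp]: "(s, s) \<in> conv E"
  unfolding conv_def by simp

lemma conv_sym: "(s, t) \<in> conv E \<Longrightarrow> (t, s) \<in> conv E"
  unfolding conv_def by (metis converse_Un converse_converse rtrancl_converseI sup_commute)

lemma conv_trans: "(s, t) \<in> conv E \<Longrightarrow> (t, u) \<in> conv E \<Longrightarrow> (s, u) \<in> conv E"
  unfolding conv_def by (rule rtrancl_trans)

lemma rstep_Bpm_imp_conv: "(s, t) \<in> rstep (Bpm B) \<Longrightarrow> (s, t) \<in> conv B"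
  by (simp add: conv_eq_rtrancl_rstep_Bpm)

subsection \<open>Most general unifiers\<close>

definition unifies :: "('f, 'v) subst \<Rightarrow> (('f, 'v) term \<times> ('f, 'v) term) list \<Rightarrow> bool" where
  "unifies \<tau> E \<longleftrightarrow> (\<forall>(a, b) \<in> set E. a \<cdot> \<tau> = b \<cdot> \<tau>)"

definition is_mgu_eqs :: "('f, 'v) subst \<Rightarrow> (('f, 'v) term \<times> ('f, 'v) term) list \<Rightarrow> bool" where
  "is_mgu_eqs \<mu> E \<longleftrightarrow> unifies \<mu> E \<and> (\<forall>\<tau>. unifies \<tau> E \<longrightarrow> (\<exists>\<delta>. \<forall>x. \<tau> x = \<mu> x \<cdot> \<delta>))"

definition vars_eqs :: "(('f, 'v) term \<times> ('f, 'v) term) list \<Rightarrow> 'v set" where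
  "vars_eqs E = (\<Union>(a, b) \<in> set E. vars_term a \<union> vars_term b)"

definition size_eqs :: "(('f, 'v) term \<times> ('f, 'v) term) list \<Rightarrow> nat" where
  "size_eqs E = (\<Sum>(a, b) \<leftarrow> E. size a + size b)"

lemma finite_vars_eqs: "finite (vars_eqs E)"
  unfolding vars_eqs_def by auto

lemma subst_factor: "(\<And>x. \<tau> x = \<mu> x \<cdot> \<delta>) \<Longrightarrow> t \<cdot> \<tau> = t \<cdot> \<mu> \<cdot> \<delta>"
  unfolding subst_subst by (rule term_subst_eq) simp

lemma unifies_Cons [simp]: "unifies \<tau> ((a, b) # E) \<longleftrightarrow> a \<cdot> \<tau> = b \<cdot> \<tau> \<and> unifies \<tau> E"
  by (simp add: unifies_def)

lemma subst_fun_upd_Var_subst: "\<tau> x = t \<cdot> \<tau> \<Longrightarrow> s \<cdot> Var(x := t) \<cdot> \<tau> = s \<cdot> \<tau>"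
  unfolding subst_subst by (rule term_subst_eq) auto

lemma is_mgu_eqs_Nil: "is_mgu_eqs Var []"
  by (simp add: is_mgu_eqs_def unifies_def) blast

lemma is_mgu_eqs_swap: "is_mgu_eqs \<mu> ((a, b) # E) \<Longrightarrow> is_mgu_eqs \<mu> ((b, a) # E)"
  unfolding is_mgu_eqs_def unifies_Cons by metis

lemma is_mgu_eqs_trivial: "is_mgu_eqs \<mu> E \<Longrightarrow> is_mgu_eqs \<mu> ((t, t) # E)"
  unfolding is_mgu_eqs_def by simp

lemma is_mgu_eqs_elim:
  assumes "x \<notin> vars_term t"
    and mgu: "is_mgu_eqs \<mu> (map (\<lambda>(a, b). (a \<cdot> Var(x := t), b \<cdot> Var(x := t))) E)"
  shows "is_mgu_eqs (\<lambda>y. (Var(x := t)) y \<cdot> \<mu>) ((Var x, t) # E)"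
proof -
  let ?\<sigma> = "Var(x := t)"
  have t: "t \<cdot> ?\<sigma> = t"
    using assms(1) by (metis fun_upd_other subst_Var term_subst_eq)
  have "a \<cdot> ?\<sigma> \<cdot> \<mu> = b \<cdot> ?\<sigma> \<cdot> \<mu>" if "(a, b) \<in> set E" for a b
    using mgu that unfolding is_mgu_eqs_def unifies_def by fastforce
  moreover have comp: "s \<cdot> (\<lambda>y. ?\<sigma> y \<cdot> \<mu>) = s \<cdot> ?\<sigma> \<cdot> \<mu>" for s
    by (rule subst_subst[symmetric])
  ultimately have "unifies (\<lambda>y. ?\<sigma> y \<cdot> \<mu>) ((Var x, t) # E)"
    unfolding unifies_def comp using t by auto
  moreover have "\<exists>\<delta>. \<forall>y. \<tau> y = ?\<sigma> y \<cdot> \<mu> \<cdot> \<delta>" if "unifies \<tau> ((Var x, t) # E)" for \<tau>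
  proof -
    from that have \<tau>x: "\<tau> x = t \<cdot> \<tau>" by (simp add: unifies_def)
    with that have "unifies \<tau> (map (\<lambda>(a, b). (a \<cdot> ?\<sigma>, b \<cdot> ?\<sigma>)) E)"
      unfolding unifies_def by (auto simp: subst_fun_upd_Var_subst)
    with mgu obtain \<delta> where "\<forall>y. \<tau> y = \<mu> y \<cdot> \<delta>" unfolding is_mgu_eqs_def by blast
    then have "?\<sigma> y \<cdot> \<mu> \<cdot> \<delta> = ?\<sigma> y \<cdot> \<tau>" for y by (simp add: subst_factor)
    with \<tau>x show ?thesis by (intro exI[of _ \<delta>]) auto
  qed
  ultimately show ?thesis unfolding is_mgu_eqs_def by (auto simp: subst_subst)
qed

lemma vars_eqs_elim:
  assumes "x \<notin> vars_term t"
  shows "vars_eqs (map (\<lambda>(a, b). (a \<cdot> Var(x := t), b \<cdot> Var(x := t))) E) \<subset> vars_eqs ((Var x, t) # E)"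
proof -
  have "vars_term (a \<cdot> Var(x := t)) \<subseteq> vars_term a - {x} \<union> vars_term t" for a
    using assms by (auto simp: vars_term_subst split: if_splits)
  then have "vars_eqs (map (\<lambda>(a, b). (a \<cdot> Var(x := t), b \<cdot> Var(x := t))) E) \<subseteq>
      vars_eqs ((Var x, t) # E) - {x}"
    using assms unfolding vars_eqs_def by fastforce
  moreover have "x \<in> vars_eqs ((Var x, t) # E)" unfolding vars_eqs_def by simp
  ultimately show ?thesis by blast
qed

lemma decompose_eqs:
  assumes "length as = length bs"
  shows "unifies \<tau> (zip as bs @ E) \<longleftrightarrow> unifies \<tau> ((Fun f as, Fun f bs) # E)"
    and "vars_eqs (zip as bs @ E) = vars_eqs ((Fun f as, Fun f bs) # E)"
    and "size_eqs (zip as bs @ E) < size_eqs ((Fun f as, Fun f bs) # E)"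
proof -
  show "unifies \<tau> (zip as bs @ E) \<longleftrightarrow> unifies \<tau> ((Fun f as, Fun f bs) # E)"
    using assms by (auto simp: unifies_def list_eq_iff_nth_eq set_zip)
  have "(\<Union>(a, b) \<in> set (zip as bs). vars_term a \<union> vars_term b) =
      (\<Union>a \<in> set as. vars_term a) \<union> (\<Union>b \<in> set bs. vars_term b)"
    using assms by (induction as bs rule: list_induct2) auto
  then show "vars_eqs (zip as bs @ E) = vars_eqs ((Fun f as, Fun f bs) # E)"
    unfolding vars_eqs_def by auto
  have "size_eqs (zip as bs) = sum_list (map size as) + sum_list (map size bs)"
    using assms unfolding size_eqs_def by (induction as bs rule: list_induct2) auto
  then show "size_eqs (zip as bs @ E) < size_eqs ((Fun f as, Fun f bs) # E)"
    by (simp add: size_eqs_def size_list_conv_sum_list)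
qed

text \<open>The Martelli--Montanari transformations terminate: eliminating a variable removes it from
  the system, while decomposition and deletion of trivial equations decrease the size.\<close>
lemma is_mgu_eqs_exists:
  fixes E :: "(('f, 'v) term \<times> ('f, 'v) term) list"
  shows "unifies \<tau> E \<Longrightarrow> \<exists>\<mu>. is_mgu_eqs \<mu> E"
proof (induction E arbitrary: \<tau>
    rule: wf_induct[OF wf_measures[of "[\<lambda>E. card (vars_eqs E), size_eqs]"]])
  case (1 E)
  then have IH: "\<exists>\<mu>. is_mgu_eqs \<mu> E'"
    if "card (vars_eqs E') < card (vars_eqs E) \<or>
        card (vars_eqs E') = card (vars_eqs E) \<and> size_eqs E' < size_eqs E" "unifies \<tau>' E'"
    for E' :: "(('f, 'v) term \<times> ('f, 'v) term) list" and \<tau>'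
    using 1(1)[rule_format, of E'] that by (auto simp: in_measures)
  have smaller_vars: "\<exists>\<mu>. is_mgu_eqs \<mu> E'" if "vars_eqs E' \<subset> vars_eqs E" "unifies \<tau>' E'"
    for E' :: "(('f, 'v) term \<times> ('f, 'v) term) list" and \<tau>'
    using IH psubset_card_mono[OF finite_vars_eqs that(1)] that(2) by blast
  have same_vars: "\<exists>\<mu>. is_mgu_eqs \<mu> E'"
    if "vars_eqs E' \<subseteq> vars_eqs E" "size_eqs E' < size_eqs E" "unifies \<tau>' E'"
    for E' :: "(('f, 'v) term \<times> ('f, 'v) term) list" and \<tau>'
  proof (cases "vars_eqs E' = vars_eqs E")
    case False
    with that smaller_vars show ?thesis by blast
  next
    case True
    with that IH show ?thesis by simp
  qed
  have elim: "\<exists>\<mu>. is_mgu_eqs \<mu> ((Var x, t) # E')"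
    if "t \<noteq> Var x" "unifies \<tau> ((Var x, t) # E')" "vars_eqs ((Var x, t) # E') = vars_eqs E"
    for x t E'
  proof -
    from that(2) have \<tau>x: "\<tau> x = t \<cdot> \<tau>" by simp
    then have "x \<notin> vars_term t" using that(1) by (rule occurs_check)
    moreover have "unifies \<tau> (map (\<lambda>(a, b). (a \<cdot> Var(x := t), b \<cdot> Var(x := t))) E')"
      using that(2) \<tau>x by (auto simp: unifies_def subst_fun_upd_Var_subst)
    ultimately show ?thesis
      using smaller_vars vars_eqs_elim that(3) is_mgu_eqs_elim by metis
  qed
  show ?case
  proof (cases E)
    case Nil
    then show ?thesis using is_mgu_eqs_Nil by blast
  next
    case (Cons e E')
    obtain a b where e: "e = (a, b)" by fastforce
    consider (triv) "a = b" | (var_left) x where "a = Var x" "b \<noteq> Var x"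
      | (var_right) x f as where "a = Fun f as" "b = Var x"
      | (Fun) f as g bs where "a = Fun f as" "b = Fun g bs"
      by (cases a; cases b) auto
    then show ?thesis
    proof cases
      case triv
      have "0 < size b" by (cases b) auto
      with triv have "vars_eqs E' \<subseteq> vars_eqs E" "size_eqs E' < size_eqs E" "unifies \<tau> E'"
        using 1(2) Cons e by (auto simp: vars_eqs_def size_eqs_def unifies_def)
      then show ?thesis using same_vars triv Cons e is_mgu_eqs_trivial by blast
    next
      case var_left
      then show ?thesis using elim 1(2) Cons e by blast
    next
      case var_right
      then have "\<exists>\<mu>. is_mgu_eqs \<mu> ((Var x, a) # E')"
        using 1(2) Cons e by (intro elim) (auto simp: unifies_def vars_eqs_def)
      then show ?thesis using Cons e var_right is_mgu_eqs_swap by blast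
    next
      case Fun
      with 1(2) Cons e have fg: "f = g" and len: "length as = length bs"
        by (auto simp: unifies_def dest: map_eq_imp_length_eq)
      note decompose = decompose_eqs[OF len, where f = g and E = E']
      with 1(2) Cons e Fun fg have "\<exists>\<mu>. is_mgu_eqs \<mu> (zip as bs @ E')"
        by (intro same_vars[of _ \<tau>]) simp_all
      with Cons e Fun fg decompose(1) show ?thesis by (simp add: is_mgu_eqs_def)
    qed
  qed
qed

lemma mgu_exists: "s \<cdot> \<tau> = t \<cdot> \<tau> \<Longrightarrow> \<exists>\<mu>. is_mgu \<mu> s t"
  using is_mgu_eqs_exists[of \<tau> "[(s, t)]"]
  unfolding is_mgu_eqs_def unifies_def is_mgu_def by auto

subsection \<open>Critical peaks\<close>

definition proper_subterms_NF :: "('f, 'v) rule set \<Rightarrow> ('f, 'v) term \<Rightarrow> bool" where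
  "proper_subterms_NF R t \<longleftrightarrow> (\<forall>q \<in> poss t. q \<noteq> [] \<longrightarrow> NF R (t |_ q))"

lemma pcp_gen_def':
  "pcp_gen R1 R2 R = {(replace_at (fst \<rho>2 \<cdot> \<sigma>) p (snd \<rho>1 \<cdot> \<sigma>), snd \<rho>2 \<cdot> \<sigma>) | \<rho>1 p \<rho>2 \<sigma>.
      overlap R1 R2 \<rho>1 p \<rho>2 \<and> is_mgu \<sigma> (fst \<rho>1) (fst \<rho>2 |_ p) \<and>
      proper_subterms_NF R (fst \<rho>2 \<cdot> \<sigma> |_ p)}"
  unfolding pcp_gen_def proper_subterms_NF_def ..

lemma NF_subst_imp_NF: "NF R (t \<cdot> \<delta>) \<Longrightarrow> NF R t"
  unfolding NF_def by (meson rstep_at_subst rstep_iff_rstep_at)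

lemma proper_subterms_NF_subst_imp: "proper_subterms_NF R (t \<cdot> \<delta>) \<Longrightarrow> proper_subterms_NF R t"
  unfolding proper_subterms_NF_def by (metis NF_subst_imp_NF poss_subst subt_at_subst)

lemma ex_bij_image_disjoint:
  assumes "infinite (UNIV :: 'v set)" "finite (V :: 'v set)" "finite (W :: 'v set)"
  obtains \<pi> where "bij \<pi>" "\<pi> ` V \<inter> W = {}"
proof -
  have "infinite (UNIV - (V \<union> W))" using assms by (simp add: Diff_infinite_finite)
  then obtain F where "finite F" "card F = card V" "F \<subseteq> UNIV - (V \<union> W)"
    using infinite_arbitrarily_large by blast
  then have F: "finite F" "card F = card V" "F \<inter> (V \<union> W) = {}" by auto
  obtain g where g: "bij_betw g V F"
    using finite_same_card_bij[OF assms(2) F(1) F(2)[symmetric]] by blast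
  define \<pi> where "\<pi> x = (if x \<in> V then g x else if x \<in> F then inv_into V g x else x)" for x
  have gF: "g x \<in> F" if "x \<in> V" for x
    using g that by (auto simp: bij_betw_def)
  have "\<pi> (\<pi> x) = x" for x
  proof -
    consider "x \<in> V" | "x \<in> F" | "x \<notin> V" "x \<notin> F" by blast
    then show ?thesis
    proof cases
      case 1
      with gF F(3) have "g x \<in> F" "g x \<notin> V" by auto
      with 1 g show ?thesis unfolding \<pi>_def by (simp add: bij_betw_inv_into_left)
    next
      case 2
      with F(3) have "x \<notin> V" by auto
      from 2 g have "inv_into V g x \<in> V" by (metis bij_betw_def inv_into_into)
      with 2 \<open>x \<notin> V\<close> g show ?thesis unfolding \<pi>_def by (simp add: bij_betw_inv_into_right)
    qed (simp add: \<pi>_def)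
  qed
  then have "bij \<pi>" by (intro o_bij[of \<pi> \<pi>]) (auto simp: fun_eq_iff)
  moreover have "\<pi> ` V \<inter> W = {}" using gF F(3) unfolding \<pi>_def by auto
  ultimately show thesis by (rule that)
qed

lemma vars_term_rename: "vars_term (t \<cdot> (Var \<circ> \<pi>)) = \<pi> ` vars_term t"
  by (simp add: vars_term_subst) blast

lemma variant_of_refl: "variant_of \<rho> \<rho>"
  unfolding variant_of_def rename_rule_def by (intro exI[of _ id]) (simp add: comp_def)

lemma variant_of_instance:
  assumes "variant_of \<rho> (l, r)"
  obtains \<tau> where "fst \<rho> \<cdot> \<mu> = l \<cdot> \<tau>" "snd \<rho> \<cdot> \<mu> = r \<cdot> \<tau>"
proof -
  from assms obtain \<pi> where "fst \<rho> = l \<cdot> (Var \<circ> \<pi>)" "snd \<rho> = r \<cdot> (Var \<circ> \<pi>)"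
    unfolding variant_of_def rename_rule_def by auto
  then show thesis by (intro that[of "\<lambda>x. \<mu> (\<pi> x)"]) (simp_all add: subst_subst)
qed

lemma rename_apart_rule:
  assumes "infinite (UNIV :: 'v set)"
  obtains \<rho> and \<theta> :: "('f, 'v) subst"
  where "variant_of \<rho> (la, ra)" "vars_rule \<rho> \<inter> vars_rule (lb, rb) = {}"
    "fst \<rho> \<cdot> \<theta> = la \<cdot> \<sigma>a" "snd \<rho> \<cdot> \<theta> = ra \<cdot> \<sigma>a" "lb \<cdot> \<theta> = lb \<cdot> \<sigma>b" "rb \<cdot> \<theta> = rb \<cdot> \<sigma>b"
proof -
  let ?V = "vars_rule (la, ra)" and ?W = "vars_rule (lb, rb)"
  obtain \<pi> where \<pi>: "bij \<pi>" "\<pi> ` ?V \<inter> ?W = {}"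
    using ex_bij_image_disjoint[OF assms, of ?V ?W] by (auto simp: vars_rule_def)
  define \<theta> where "\<theta> y = (if y \<in> \<pi> ` ?V then \<sigma>a (inv \<pi> y) else \<sigma>b y)" for y
  have inv: "inv \<pi> (\<pi> x) = x" for x using \<pi>(1) by (simp add: bij_is_inj)
  show thesis
  proof (rule that[of "rename_rule \<pi> (la, ra)" \<theta>])
    show "variant_of (rename_rule \<pi> (la, ra)) (la, ra)"
      using \<pi>(1) unfolding variant_of_def by blast
    show "vars_rule (rename_rule \<pi> (la, ra)) \<inter> ?W = {}"
      using \<pi>(2) by (simp add: rename_rule_def vars_rule_def vars_term_rename image_Un)
    show "fst (rename_rule \<pi> (la, ra)) \<cdot> \<theta> = la \<cdot> \<sigma>a" "snd (rename_rule \<pi> (la, ra)) \<cdot> \<theta> = ra \<cdot> \<sigma>a"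
      unfolding rename_rule_def
      by (auto simp: subst_subst \<theta>_def vars_rule_def inv intro!: term_subst_eq)
    have "\<theta> y = \<sigma>b y" if "y \<in> ?W" for y
      using \<pi>(2) that unfolding \<theta>_def by auto
    then show "lb \<cdot> \<theta> = lb \<cdot> \<sigma>b" "rb \<cdot> \<theta> = rb \<cdot> \<sigma>b"
      by (auto simp: vars_rule_def intro!: term_subst_eq)
  qed
qed

lemma prime_peak_instance:
  fixes R1 R2 R :: "('f, 'v) rule set"
  assumes inf: "infinite (UNIV :: 'v set)"
    and rules: "(la, ra) \<in> R1" "(lb, rb) \<in> R2" and vars: "vars_term rb \<subseteq> vars_term lb"
    and p: "p \<in> fun_poss lb" and redex: "lb \<cdot> \<sigma>b |_ p = la \<cdot> \<sigma>a"
    and prime: "proper_subterms_NF R (la \<cdot> \<sigma>a)"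
  shows "replace_at (lb \<cdot> \<sigma>b) p (ra \<cdot> \<sigma>a) = rb \<cdot> \<sigma>b \<or>
    (\<exists>c d \<delta>. (c, d) \<in> pcp_gen R1 R2 R \<and>
       replace_at (lb \<cdot> \<sigma>b) p (ra \<cdot> \<sigma>a) = c \<cdot> \<delta> \<and> rb \<cdot> \<sigma>b = d \<cdot> \<delta>)"
proof -
  obtain \<rho>1 and \<theta> :: "('f, 'v) subst"
    where \<rho>1: "variant_of \<rho>1 (la, ra)" "vars_rule \<rho>1 \<inter> vars_rule (lb, rb) = {}"
    and \<theta>: "fst \<rho>1 \<cdot> \<theta> = la \<cdot> \<sigma>a" "snd \<rho>1 \<cdot> \<theta> = ra \<cdot> \<sigma>a" "lb \<cdot> \<theta> = lb \<cdot> \<sigma>b" "rb \<cdot> \<theta> = rb \<cdot> \<sigma>b"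
    by (rule rename_apart_rule[OF inf])
  have pos: "p \<in> poss lb" using p by (rule fun_poss_imp_poss)
  have unif: "fst \<rho>1 \<cdot> \<theta> = lb |_ p \<cdot> \<theta>"
    using \<theta> redex pos by (simp flip: subt_at_subst)
  then obtain \<mu> where \<mu>: "is_mgu \<mu> (fst \<rho>1) (lb |_ p)" using mgu_exists by blast
  with unif obtain \<delta> where "\<forall>x. \<theta> x = \<mu> x \<cdot> \<delta>" unfolding is_mgu_def by blast
  then have \<theta>_factor: "t \<cdot> \<theta> = t \<cdot> \<mu> \<cdot> \<delta>" for t by (simp add: subst_factor)
  show ?thesis
  proof (cases "p = [] \<and> variant_of \<rho>1 (lb, rb)")
    case True
    \<comment> \<open>a rule overlapping a variant of itself at the root: as the right-hand side has no
      extra variables, the peak is trivial\<close>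
    then obtain \<pi> where "\<rho>1 = rename_rule \<pi> (lb, rb)" unfolding variant_of_def by blast
    then have \<rho>1_eq: "fst \<rho>1 = lb \<cdot> (Var \<circ> \<pi>)" "snd \<rho>1 = rb \<cdot> (Var \<circ> \<pi>)"
      by (simp_all add: rename_rule_def)
    with unif True have "lb \<cdot> (\<lambda>x. \<theta> (\<pi> x)) = lb \<cdot> \<theta>" by (simp add: subst_subst)
    with vars have "rb \<cdot> (\<lambda>x. \<theta> (\<pi> x)) = rb \<cdot> \<theta>"
      by (metis subsetD term_subst_eq term_subst_eq_rev)
    with \<theta> \<rho>1_eq have "ra \<cdot> \<sigma>a = rb \<cdot> \<sigma>b" by (simp add: subst_subst)
    with True show ?thesis by simp
  next
    case False
    with rules \<rho>1 p unif have "overlap R1 R2 \<rho>1 p (lb, rb)"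
      unfolding overlap_def unifiable_def by (auto intro: variant_of_refl)
    moreover have "lb \<cdot> \<mu> |_ p = fst \<rho>1 \<cdot> \<mu>"
      using \<mu> pos unfolding is_mgu_def by (simp add: subt_at_subst)
    with prime \<theta>(1) have "proper_subterms_NF R (lb \<cdot> \<mu> |_ p)"
      by (metis \<theta>_factor proper_subterms_NF_subst_imp)
    ultimately have "(replace_at (lb \<cdot> \<mu>) p (snd \<rho>1 \<cdot> \<mu>), rb \<cdot> \<mu>) \<in> pcp_gen R1 R2 R"
      using \<mu> unfolding pcp_gen_def' by force
    moreover have "replace_at (lb \<cdot> \<sigma>b) p (ra \<cdot> \<sigma>a) = replace_at (lb \<cdot> \<mu>) p (snd \<rho>1 \<cdot> \<mu>) \<cdot> \<delta>"
      using pos \<theta> by (simp add: replace_at_subst poss_subst flip: \<theta>_factor)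
    moreover have "rb \<cdot> \<sigma>b = rb \<cdot> \<mu> \<cdot> \<delta>" using \<theta> by (simp flip: \<theta>_factor)
    ultimately show ?thesis by blast
  qed
qed

lemma pcp_gen_subset_peaks: "pcp_gen R1 R2 R \<subseteq> (rstep R1)\<inverse> O rstep R2"
proof (rule subrelI)
  fix c d assume "(c, d) \<in> pcp_gen R1 R2 R"
  then obtain \<rho>1 p \<rho>2 \<mu> where cd: "c = replace_at (fst \<rho>2 \<cdot> \<mu>) p (snd \<rho>1 \<cdot> \<mu>)" "d = snd \<rho>2 \<cdot> \<mu>"
    and ov: "overlap R1 R2 \<rho>1 p \<rho>2" and \<mu>: "is_mgu \<mu> (fst \<rho>1) (fst \<rho>2 |_ p)"
    unfolding pcp_gen_def by blast
  from ov obtain la ra lb rb where a: "(la, ra) \<in> R1" "variant_of \<rho>1 (la, ra)"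
    and b: "(lb, rb) \<in> R2" "variant_of \<rho>2 (lb, rb)" and p: "p \<in> poss (fst \<rho>2)"
    unfolding overlap_def by (auto dest: fun_poss_imp_poss)
  obtain \<tau>a where \<tau>a: "fst \<rho>1 \<cdot> \<mu> = la \<cdot> \<tau>a" "snd \<rho>1 \<cdot> \<mu> = ra \<cdot> \<tau>a"
    by (rule variant_of_instance[OF a(2)])
  obtain \<tau>b where \<tau>b: "fst \<rho>2 \<cdot> \<mu> = lb \<cdot> \<tau>b" "snd \<rho>2 \<cdot> \<mu> = rb \<cdot> \<tau>b"
    by (rule variant_of_instance[OF b(2)])
  have "fst \<rho>2 \<cdot> \<mu> |_ p = la \<cdot> \<tau>a"
    using \<mu> p \<tau>a unfolding is_mgu_def by (simp add: subt_at_subst)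
  with a(1) p cd(1) \<tau>a have "(fst \<rho>2 \<cdot> \<mu>, c) \<in> rstep R1"
    unfolding rstep_def by (auto intro: poss_subst)
  moreover have "(fst \<rho>2 \<cdot> \<mu>, d) \<in> rstep R2"
    using rstep_at_root[OF b(1)] cd(2) \<tau>b rstep_iff_rstep_at by metis
  ultimately show "(c, d) \<in> (rstep R1)\<inverse> O rstep R2" by blast
qed

subsection \<open>Variable overlaps\<close>

lemma distinct_concat_nth_disjoint:
  "distinct (concat xss) \<Longrightarrow> i < length xss \<Longrightarrow> j < length xss \<Longrightarrow> i \<noteq> j \<Longrightarrow>
    set (xss ! i) \<inter> set (xss ! j) = {}"
proof (induction xss arbitrary: i j)
  case (Cons xs xss)
  have nth_sub: "set (xss ! k) \<subseteq> set (concat xss)" if "k < length xss" for k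
    using that nth_mem by fastforce
  consider "i = 0" "j \<noteq> 0" | "i \<noteq> 0" "j = 0" | "i \<noteq> 0" "j \<noteq> 0"
    using Cons.prems(4) by fastforce
  then show ?case
  proof cases
    case 1
    with Cons.prems nth_sub[of "j - 1"] show ?thesis by (cases j) auto
  next
    case 2
    with Cons.prems nth_sub[of "i - 1"] show ?thesis by (cases i) auto
  next
    case 3
    with Cons.prems Cons.IH[of "i - 1" "j - 1"] show ?thesis by (cases i; cases j) auto
  qed
qed simp

lemma linear_term_replace_at_subst:
  assumes "linear_term l" "p \<in> poss l" "l |_ p = Var x"
  shows "replace_at (l \<cdot> \<sigma>) p u = l \<cdot> \<sigma>(x := u)"
  using assms
proof (induction l arbitrary: p)
  case (Var y)
  then show ?case by (cases p) auto
next
  case (Fun f ts)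
  then obtain i p' where p: "p = i # p'" "i < length ts" "p' \<in> poss (ts ! i)"
    by (cases p) auto
  have dist: "distinct (concat (map vars_term_list ts))"
    using Fun.prems unfolding linear_term_def by simp
  then have "linear_term (ts ! i)"
    using p(2) unfolding linear_term_def by (metis distinct_concat_iff length_map nth_map nth_mem)
  moreover have x: "ts ! i |_ p' = Var x" using Fun.prems p by simp
  ultimately have IH: "replace_at (ts ! i \<cdot> \<sigma>) p' u = ts ! i \<cdot> \<sigma>(x := u)"
    using Fun.IH[OF nth_mem[OF p(2)]] p(3) by blast
  have "x \<in> vars_term (ts ! i)" using var_poss_imp_vars_term[OF p(3) x] .
  then have "ts ! j \<cdot> \<sigma> = ts ! j \<cdot> \<sigma>(x := u)" if "j < length ts" "j \<noteq> i" for j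
    using distinct_concat_nth_disjoint[OF dist, of i j] that p(2)
    by (intro term_subst_eq) auto
  with p IH show ?case by (auto intro!: nth_equalityI simp: nth_list_update fun_upd_def)
qed

lemma replace_at_subst_rtrancl:
  assumes S: "ctxt_closed S" and p: "p \<in> poss l" "l |_ p = Var x"
    and steps: "\<And>y. (\<sigma> y, \<tau> y) \<in> S\<^sup>*"
  shows "(replace_at (l \<cdot> \<sigma>) p (\<tau> x), l \<cdot> \<tau>) \<in> S\<^sup>*"
  using p
proof (induction l arbitrary: p)
  case (Var y)
  then show ?case by (cases p) auto
next
  case (Fun f ts)
  then obtain i p' where p: "p = i # p'" "i < length ts" "p' \<in> poss (ts ! i)"
    by (cases p) auto
  let ?ts = "(map (\<lambda>t. t \<cdot> \<sigma>) ts)[i := replace_at (ts ! i \<cdot> \<sigma>) p' (\<tau> x)]"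
  have "(replace_at (ts ! i \<cdot> \<sigma>) p' (\<tau> x), ts ! i \<cdot> \<tau>) \<in> S\<^sup>*"
    using Fun.IH[OF nth_mem[OF p(2)] p(3)] Fun.prems p by simp
  moreover have "(ts ! j \<cdot> \<sigma>, ts ! j \<cdot> \<tau>) \<in> S\<^sup>*" for j
    using rtrancl_subst[OF S] steps by blast
  ultimately have "\<forall>j < length ?ts. (?ts ! j, map (\<lambda>t. t \<cdot> \<tau>) ts ! j) \<in> S\<^sup>*"
    using p(2) by (auto simp: nth_list_update)
  then have "(Fun f ([] @ ?ts), Fun f ([] @ map (\<lambda>t. t \<cdot> \<tau>) ts)) \<in> S\<^sup>*"
    by (intro rtrancl_Fun_args[OF S]) simp_all
  with p show ?case by simp
qed

lemma variable_overlap: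
  assumes p: "p \<in> poss (l \<cdot> \<sigma>)" "p \<notin> fun_poss l" and step: "(l \<cdot> \<sigma> |_ p, v) \<in> rstep E"
  obtains \<tau> where "(replace_at (l \<cdot> \<sigma>) p v, l \<cdot> \<tau>) \<in> (rstep E)\<^sup>*"
    "\<And>y. (\<sigma> y, \<tau> y) \<in> (rstep E)\<^sup>*" "linear_term l \<Longrightarrow> replace_at (l \<cdot> \<sigma>) p v = l \<cdot> \<tau>"
proof -
  obtain p1 p2 x where p12: "p = p1 @ p2" "p1 \<in> poss l" "l |_ p1 = Var x" "p2 \<in> poss (\<sigma> x)"
    using poss_subst_not_fun_poss[OF p] by blast
  define \<tau> where "\<tau> = \<sigma>(x := replace_at (\<sigma> x) p2 v)"
  have p1: "p1 \<in> poss (l \<cdot> \<sigma>)" "l \<cdot> \<sigma> |_ p1 = \<sigma> x"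
    using p12 by (simp_all add: poss_subst subt_at_subst)
  have eq: "replace_at (l \<cdot> \<sigma>) p v = replace_at (l \<cdot> \<sigma>) p1 (\<tau> x)"
    using p12(1) p1 by (simp add: replace_at_append \<tau>_def)
  have "(\<sigma> x |_ p2, v) \<in> rstep E" using step p12(1) p1 by (simp add: subt_at_append)
  then have "(replace_at (\<sigma> x) p2 (\<sigma> x |_ p2), replace_at (\<sigma> x) p2 v) \<in> rstep E"
    using ctxt_closed_rstep p12(4) unfolding ctxt_closed_def by blast
  with p12(4) have "(\<sigma> x, \<tau> x) \<in> rstep E" by (simp add: \<tau>_def)
  then have steps: "(\<sigma> y, \<tau> y) \<in> (rstep E)\<^sup>*" for y
    using p12(4) by (auto simp: \<tau>_def)
  show thesis
  proof (rule that[OF _ steps])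
    show "(replace_at (l \<cdot> \<sigma>) p v, l \<cdot> \<tau>) \<in> (rstep E)\<^sup>*"
      unfolding eq using replace_at_subst_rtrancl[OF ctxt_closed_rstep p12(2,3) steps] .
    show "replace_at (l \<cdot> \<sigma>) p v = l \<cdot> \<tau>" if "linear_term l"
      unfolding eq \<tau>_def using linear_term_replace_at_subst[OF that p12(2,3)] p12 p1
      by (simp add: replace_at_append)
  qed
qed

subsection \<open>Joinability modulo\<close>

lemma join_modI:
  "(t, a) \<in> (rstep R)\<^sup>* \<Longrightarrow> (a, b) \<in> conv B \<Longrightarrow> (u, b) \<in> (rstep R)\<^sup>* \<Longrightarrow> (t, u) \<in> join_mod R B"
  unfolding join_mod_def simB_def by blast

lemma join_modE:
  assumes "(t, u) \<in> join_mod R B"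
  obtains a b where "(t, a) \<in> (rstep R)\<^sup>*" "(a, b) \<in> conv B" "(u, b) \<in> (rstep R)\<^sup>*"
  using assms unfolding join_mod_def simB_def by blast

lemma join_mod_sym: "(t, u) \<in> join_mod R B \<Longrightarrow> (u, t) \<in> join_mod R B"
  by (meson conv_sym join_modE join_modI)

lemma conv_imp_join_mod: "(t, u) \<in> conv B \<Longrightarrow> (t, u) \<in> join_mod R B"
  by (blast intro: join_modI)

lemma rsteps_join_mod:
  "(s, s') \<in> (rstep R)\<^sup>* \<Longrightarrow> (s', t') \<in> join_mod R B \<Longrightarrow> (t, t') \<in> (rstep R)\<^sup>* \<Longrightarrow>
    (s, t) \<in> join_mod R B"
  by (meson join_modE join_modI rtrancl_trans)

lemma join_mod_ctxt:
  assumes "(s, t) \<in> join_mod R B" "q \<in> poss C"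
  shows "(replace_at C q s, replace_at C q t) \<in> join_mod R B"
proof -
  from assms(1) obtain a b where "(s, a) \<in> (rstep R)\<^sup>*" "(a, b) \<in> conv B" "(t, b) \<in> (rstep R)\<^sup>*"
    by (rule join_modE)
  with assms(2) ctxt_closed_rsteps ctxt_closed_conv show ?thesis
    unfolding ctxt_closed_def by (blast intro: join_modI)
qed

lemma join_mod_subst:
  assumes "(s, t) \<in> join_mod R B"
  shows "(s \<cdot> \<delta>, t \<cdot> \<delta>) \<in> join_mod R B"
proof -
  from assms obtain a b where "(s, a) \<in> (rstep R)\<^sup>*" "(a, b) \<in> conv B" "(t, b) \<in> (rstep R)\<^sup>*"
    by (rule join_modE)
  with subst_closed_rsteps subst_closed_conv show ?thesis
    unfolding subst_closed_def by (blast intro: join_modI)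
qed

subsection \<open>Peaks of rewrite steps\<close>

lemma parallel_peak_commute:
  assumes t: "(w, t) \<in> rstep_at E1 p1" and u: "(w, u) \<in> rstep_at E2 p2"
    and par: "parallel_pos p1 p2"
  obtains v where "(t, v) \<in> rstep E2" "(u, v) \<in> rstep E1"
proof -
  from t obtain l1 r1 \<sigma>1 where 1: "(l1, r1) \<in> E1" "p1 \<in> poss w" "w |_ p1 = l1 \<cdot> \<sigma>1"
      "t = replace_at w p1 (r1 \<cdot> \<sigma>1)"
    unfolding rstep_at_def by blast
  from u obtain l2 r2 \<sigma>2 where 2: "(l2, r2) \<in> E2" "p2 \<in> poss w" "w |_ p2 = l2 \<cdot> \<sigma>2"
      "u = replace_at w p2 (r2 \<cdot> \<sigma>2)"
    unfolding rstep_at_def by blast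
  note swap = parallel_replace_at[OF par 1(2) 2(2)]
    parallel_replace_at[OF parallel_pos_sym[OF par] 2(2) 1(2)]
  let ?v = "replace_at t p2 (r2 \<cdot> \<sigma>2)"
  have "p2 \<in> poss t" "t |_ p2 = l2 \<cdot> \<sigma>2" using swap 1 2 by auto
  with 2(1) have "(t, ?v) \<in> rstep E2" unfolding rstep_def by blast
  moreover have "p1 \<in> poss u" "u |_ p1 = l1 \<cdot> \<sigma>1" "?v = replace_at u p1 (r1 \<cdot> \<sigma>1)"
    using swap 1 2 by auto
  with 1(1) have "(u, ?v) \<in> rstep E1" unfolding rstep_def by blast
  ultimately show thesis by (rule that)
qed

lemma nested_peak_decomp:
  assumes t: "(w, t) \<in> rstep_at E1 (q @ p)" and u: "(w, u) \<in> rstep_at E2 q"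
  obtains la ra \<sigma>a lb rb \<sigma>b where "(la, ra) \<in> E1" "(lb, rb) \<in> E2" "q \<in> poss w"
    "w |_ q = lb \<cdot> \<sigma>b" "p \<in> poss (lb \<cdot> \<sigma>b)" "lb \<cdot> \<sigma>b |_ p = la \<cdot> \<sigma>a"
    "t = replace_at w q (replace_at (lb \<cdot> \<sigma>b) p (ra \<cdot> \<sigma>a))" "u = replace_at w q (rb \<cdot> \<sigma>b)"
proof -
  from t obtain la ra \<sigma>a where 1: "(la, ra) \<in> E1" "q @ p \<in> poss w" "w |_ (q @ p) = la \<cdot> \<sigma>a"
      "t = replace_at w (q @ p) (ra \<cdot> \<sigma>a)"
    unfolding rstep_at_def by blast
  from u obtain lb rb \<sigma>b where 2: "(lb, rb) \<in> E2" "q \<in> poss w" "w |_ q = lb \<cdot> \<sigma>b"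
      "u = replace_at w q (rb \<cdot> \<sigma>b)"
    unfolding rstep_at_def by blast
  show thesis
    by (rule that[OF 1(1) 2(1) 2(2) 2(3)])
      (use 1 2 in \<open>simp_all add: poss_append_poss subt_at_append replace_at_append\<close>)
qed

lemma nested_peak_joinable:
  fixes E1 E2 R :: "('f, 'v) rule set"
  assumes inf: "infinite (UNIV :: 'v set)"
    and inner: "(w, t) \<in> rstep_at E1 (q @ p)" and outer: "(w, u) \<in> rstep_at E2 q"
    and prime: "proper_subterms_NF R (w |_ (q @ p))"
    and vars: "\<And>l r. (l, r) \<in> E2 \<Longrightarrow> vars_term r \<subseteq> vars_term l"
    and cps: "pcp_gen E1 E2 R \<subseteq> join_mod R B"
    and var_peaks: "\<And>l r \<sigma> p' v. (l, r) \<in> E2 \<Longrightarrow> p' \<in> poss (l \<cdot> \<sigma>) \<Longrightarrow> p' \<notin> fun_poss l \<Longrightarrow>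
      (l \<cdot> \<sigma> |_ p', v) \<in> rstep E1 \<Longrightarrow> (replace_at (l \<cdot> \<sigma>) p' v, r \<cdot> \<sigma>) \<in> join_mod R B"
  shows "(t, u) \<in> join_mod R B"
proof -
  obtain la ra \<sigma>a lb rb \<sigma>b where rules: "(la, ra) \<in> E1" "(lb, rb) \<in> E2"
    and q: "q \<in> poss w" "w |_ q = lb \<cdot> \<sigma>b"
    and p: "p \<in> poss (lb \<cdot> \<sigma>b)" "lb \<cdot> \<sigma>b |_ p = la \<cdot> \<sigma>a"
    and tu: "t = replace_at w q (replace_at (lb \<cdot> \<sigma>b) p (ra \<cdot> \<sigma>a))" "u = replace_at w q (rb \<cdot> \<sigma>b)"
    by (rule nested_peak_decomp[OF inner outer])
  have "(replace_at (lb \<cdot> \<sigma>b) p (ra \<cdot> \<sigma>a), rb \<cdot> \<sigma>b) \<in> join_mod R B"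
  proof (cases "p \<in> fun_poss lb")
    case True
    have "w |_ (q @ p) = la \<cdot> \<sigma>a"
      using q p by (simp only: subt_at_append)
    with prime have "proper_subterms_NF R (la \<cdot> \<sigma>a)" by simp
    from prime_peak_instance[OF inf rules vars[OF rules(2)] True p(2) this]
    consider (trivial) "replace_at (lb \<cdot> \<sigma>b) p (ra \<cdot> \<sigma>a) = rb \<cdot> \<sigma>b"
      | (critical) c d \<delta> where "(c, d) \<in> pcp_gen E1 E2 R"
          "replace_at (lb \<cdot> \<sigma>b) p (ra \<cdot> \<sigma>a) = c \<cdot> \<delta>" "rb \<cdot> \<sigma>b = d \<cdot> \<delta>"
      by blast
    then show ?thesis
    proof cases
      case trivial
      then show ?thesis by (simp add: conv_imp_join_mod)
    next
      case critical
      with cps have "(c, d) \<in> join_mod R B" by blast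
      from join_mod_subst[OF this, of \<delta>] critical show ?thesis by simp
    qed
  next
    case False
    have "(lb \<cdot> \<sigma>b |_ p, ra \<cdot> \<sigma>a) \<in> rstep E1"
      unfolding p(2) rstep_iff_rstep_at using rstep_at_root[OF rules(1)] by blast
    with False show ?thesis by (intro var_peaks[OF rules(2) p(1)])
  qed
  from this q(1) show ?thesis unfolding tu by (rule join_mod_ctxt)
qed

lemma variable_peak_inner_rstep_join_mod:
  assumes "\<And>\<tau>. (l \<cdot> \<tau>, r \<cdot> \<tau>) \<in> join_mod R B"
    and "p \<in> poss (l \<cdot> \<sigma>)" "p \<notin> fun_poss l" "(l \<cdot> \<sigma> |_ p, v) \<in> rstep R"
  shows "(replace_at (l \<cdot> \<sigma>) p v, r \<cdot> \<sigma>) \<in> join_mod R B"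
proof -
  obtain \<tau> where \<tau>: "(replace_at (l \<cdot> \<sigma>) p v, l \<cdot> \<tau>) \<in> (rstep R)\<^sup>*"
    "\<And>y. (\<sigma> y, \<tau> y) \<in> (rstep R)\<^sup>*"
    using variable_overlap[OF assms(2-4)] by metis
  have "(r \<cdot> \<sigma>, r \<cdot> \<tau>) \<in> (rstep R)\<^sup>*"
    by (rule rtrancl_subst[OF ctxt_closed_rstep \<tau>(2)])
  with \<tau>(1) assms(1) show ?thesis by (rule rsteps_join_mod)
qed

lemma variable_peak_inner_Bpm_join_mod:
  assumes "(l, r) \<in> R" "linear_term l"
    and "p \<in> poss (l \<cdot> \<sigma>)" "p \<notin> fun_poss l" "(l \<cdot> \<sigma> |_ p, v) \<in> rstep (Bpm B)"
  shows "(replace_at (l \<cdot> \<sigma>) p v, r \<cdot> \<sigma>) \<in> join_mod R B"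
proof -
  obtain \<tau> where \<tau>: "\<And>y. (\<sigma> y, \<tau> y) \<in> (rstep (Bpm B))\<^sup>*" "replace_at (l \<cdot> \<sigma>) p v = l \<cdot> \<tau>"
  proof (rule variable_overlap[OF assms(3-5)])
    fix \<tau> assume "\<And>y. (\<sigma> y, \<tau> y) \<in> (rstep (Bpm B))\<^sup>*"
      and "linear_term l \<Longrightarrow> replace_at (l \<cdot> \<sigma>) p v = l \<cdot> \<tau>"
    with assms(2) show thesis using that by blast
  qed
  have "(l \<cdot> \<tau>, r \<cdot> \<tau>) \<in> (rstep R)\<^sup>*"
    using rstep_at_root[OF assms(1)] rstep_iff_rstep_at by blast
  moreover have "(r \<cdot> \<sigma>, r \<cdot> \<tau>) \<in> conv B"
    unfolding conv_eq_rtrancl_rstep_Bpm by (rule rtrancl_subst[OF ctxt_closed_rstep \<tau>(1)])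
  then have "(r \<cdot> \<tau>, r \<cdot> \<sigma>) \<in> conv B" by (rule conv_sym)
  ultimately show ?thesis
    unfolding \<tau>(2) using rtrancl.rtrancl_refl by (rule join_modI)
qed

subsection \<open>Normal forms modulo\<close>

definition unique_NF_mod :: "('f, 'v) rule set \<Rightarrow> ('f, 'v) rule set \<Rightarrow> ('f, 'v) term \<Rightarrow> bool" where
  "unique_NF_mod R B s \<longleftrightarrow> (\<forall>s' n n'. (s, s') \<in> conv B \<longrightarrow> (s, n) \<in> (rstep R)\<^sup>* \<longrightarrow> NF R n \<longrightarrow>
      (s', n') \<in> (rstep R)\<^sup>* \<longrightarrow> NF R n' \<longrightarrow> (n, n') \<in> conv B)"

definition NF_equiv ::
    "('f, 'v) rule set \<Rightarrow> ('f, 'v) rule set \<Rightarrow> ('f, 'v) term \<Rightarrow> ('f, 'v) term \<Rightarrow> bool" where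
  "NF_equiv R B t u \<longleftrightarrow> (\<exists>n n'. (t, n) \<in> (rstep R)\<^sup>* \<and> NF R n \<and> (u, n') \<in> (rstep R)\<^sup>* \<and> NF R n' \<and>
      (n, n') \<in> conv B)"

lemma unique_NF_modD:
  "unique_NF_mod R B s \<Longrightarrow> (s, s') \<in> conv B \<Longrightarrow> (s, n) \<in> (rstep R)\<^sup>* \<Longrightarrow> NF R n \<Longrightarrow>
    (s', n') \<in> (rstep R)\<^sup>* \<Longrightarrow> NF R n' \<Longrightarrow> (n, n') \<in> conv B"
  unfolding unique_NF_mod_def by blast

lemma wf_relmod_trancl: "terminating_mod R B \<Longrightarrow> wf (((relmod R B)\<^sup>+)\<inverse>)"
  unfolding terminating_mod_def trancl_converse[symmetric]
  by (intro wf_trancl) (simp add: wf_iff_no_infinite_down_chain)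

lemma relmod_trancl_step: "(s, w) \<in> conv B \<Longrightarrow> (w, t) \<in> rstep R \<Longrightarrow> (s, t) \<in> (relmod R B)\<^sup>+"
  unfolding relmod_def simB_def by (meson conv_refl relcomp.relcompI r_into_trancl)

lemma relmod_trancl_conv:
  assumes "(s, t) \<in> (relmod R B)\<^sup>+" "(t, u) \<in> conv B"
  shows "(s, u) \<in> (relmod R B)\<^sup>+"
proof -
  have "(a, u) \<in> relmod R B" if "(a, t) \<in> relmod R B" for a
    using that assms(2) unfolding relmod_def simB_def by (blast intro: conv_trans)
  with assms(1) show ?thesis by (cases rule: tranclE) (auto intro: trancl_into_trancl)
qed

lemma relmod_trancl_rsteps:
  assumes "(s, t) \<in> (relmod R B)\<^sup>+" "(t, u) \<in> (rstep R)\<^sup>*"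
  shows "(s, u) \<in> (relmod R B)\<^sup>+"
  using assms(2)
proof induction
  case (step y z)
  then show ?case using relmod_trancl_step[OF conv_refl, of y z] by (meson trancl_trans)
qed (rule assms(1))

lemma terminating_mod_NF_exists:
  assumes "terminating_mod R B"
  obtains n where "(t, n) \<in> (rstep R)\<^sup>*" "NF R n"
proof -
  have "\<exists>n. (t, n) \<in> (rstep R)\<^sup>* \<and> NF R n"
  proof (induction t rule: wf_induct[OF wf_relmod_trancl[OF assms]])
    case (1 t)
    show ?case
    proof (cases "NF R t")
      case False
      then obtain t' where t': "(t, t') \<in> rstep R" unfolding NF_def by blast
      then have "(t', t) \<in> ((relmod R B)\<^sup>+)\<inverse>" using relmod_trancl_step[OF conv_refl] by blast
      with 1 t' show ?thesis by (meson converse_rtrancl_into_rtrancl)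
    qed blast
  qed
  with that show thesis by blast
qed

lemma relmod_trancl_not_conv:
  "terminating_mod R B \<Longrightarrow> (s, t) \<in> (relmod R B)\<^sup>+ \<Longrightarrow> (t, s) \<in> conv B \<Longrightarrow> False"
  using relmod_trancl_conv wf_not_refl[OF wf_relmod_trancl] by blast

lemma NF_equiv_refl: "terminating_mod R B \<Longrightarrow> NF_equiv R B t t"
  unfolding NF_equiv_def by (meson conv_refl terminating_mod_NF_exists)

lemma NF_equiv_sym: "NF_equiv R B t u \<Longrightarrow> NF_equiv R B u t"
  unfolding NF_equiv_def using conv_sym by blast

lemma NF_equiv_trans:
  "unique_NF_mod R B u \<Longrightarrow> NF_equiv R B t u \<Longrightarrow> NF_equiv R B u v \<Longrightarrow> NF_equiv R B t v"
  unfolding NF_equiv_def by (meson conv_refl conv_trans unique_NF_modD)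

lemma join_mod_imp_NF_equiv:
  assumes "terminating_mod R B" "(t, a) \<in> (rstep R)\<^sup>*" "(a, b) \<in> conv B" "(u, b) \<in> (rstep R)\<^sup>*"
    and "unique_NF_mod R B a"
  shows "NF_equiv R B t u"
proof -
  obtain na nb where "(a, na) \<in> (rstep R)\<^sup>*" "NF R na" "(b, nb) \<in> (rstep R)\<^sup>*" "NF R nb"
    using terminating_mod_NF_exists[OF assms(1)] by metis
  with assms(2-5) show ?thesis
    unfolding NF_equiv_def by (meson rtrancl_trans unique_NF_modD)
qed

lemma CR_mod_if_unique_NF_mod:
  assumes "terminating_mod R B" "\<And>s. unique_NF_mod R B s"
  shows "CR_mod R B"
proof -
  have single: "NF_equiv R B y z" if "(y, z) \<in> rstep (R \<union> B) \<union> (rstep (R \<union> B))\<inverse>" for y z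
  proof -
    from that consider "(y, z) \<in> rstep R" | "(z, y) \<in> rstep R" | "(y, z) \<in> conv B"
      unfolding rstep_union conv_def by blast
    then show ?thesis
    proof cases
      case 1
      then show ?thesis using NF_equiv_refl[OF assms(1), of z] unfolding NF_equiv_def
        by (meson converse_rtrancl_into_rtrancl)
    next
      case 2
      then show ?thesis using NF_equiv_refl[OF assms(1), of y] unfolding NF_equiv_def
        by (meson converse_rtrancl_into_rtrancl)
    next
      case 3
      then show ?thesis using assms join_mod_imp_NF_equiv by blast
    qed
  qed
  have "NF_equiv R B x y" if "(x, y) \<in> conv (R \<union> B)" for x y
    using that unfolding conv_def
  proof (induction rule: rtrancl_induct)
    case base
    then show ?case by (rule NF_equiv_refl[OF assms(1)])
  next
    case (step y z)
    then show ?case using NF_equiv_trans[OF assms(2)] single[OF step(2)] by blast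
  qed
  then show ?thesis
    unfolding CR_mod_def NF_equiv_def by (auto intro: join_modI)
qed

subsection \<open>Resolving local peaks modulo B\<close>

definition peak_measure :: "('f, 'v) term \<Rightarrow> pos \<Rightarrow> pos \<Rightarrow> nat" where
  "peak_measure w p1 p2 =
    (if \<exists>r. p2 = p1 @ r then size (w |_ p2) else if \<exists>r. p1 = p2 @ r then size (w |_ p1) else 0)"

lemma peak_measure_below: "peak_measure w p (p @ r) = size (w |_ (p @ r))"
  unfolding peak_measure_def by auto

lemma peak_measure_above: "peak_measure w (p @ r) p = size (w |_ (p @ r))"
  unfolding peak_measure_def by auto

lemma non_prime_redex_step:
  assumes "P \<in> poss w" "\<not> proper_subterms_NF R (w |_ P)"
  obtains r w' where "(w, w') \<in> rstep_at R (P @ r)" "size (w |_ (P @ r)) < size (w |_ P)"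
proof -
  from assms(2) obtain q v where q: "q \<in> poss (w |_ P)" "q \<noteq> []" "(w |_ P |_ q, v) \<in> rstep R"
    unfolding proper_subterms_NF_def NF_def by blast
  then obtain r where r: "(w |_ P |_ q, v) \<in> rstep_at R r" using rstep_iff_rstep_at by blast
  have Pq: "P @ q \<in> poss w" "w |_ (P @ q) = w |_ P |_ q"
    using assms(1) q(1) by (simp_all add: poss_append_poss subt_at_append)
  from rstep_at_ctxt[OF r Pq(1)] Pq have "(w, replace_at w (P @ q) v) \<in> rstep_at R (P @ q @ r)"
    by (metis append.assoc replace_at_ident)
  moreover have "q @ r \<in> poss (w |_ P)"
    using q(1) rstep_at_imp_poss[OF r] by (simp add: poss_append_poss)
  then have "size (w |_ (P @ q @ r)) < size (w |_ P)"
    using assms(1) q(2) by (simp add: subt_at_append size_subt_at_less)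
  ultimately show thesis by (rule that)
qed

locale pcp_joinable_mod =
  fixes R B :: "('f, 'v) rule set"
  assumes infinite_vars: "infinite (UNIV :: 'v set)"
    and wf_R: "wf_trs R" and var_preserving_B: "var_preserving B"
    and left_linear_R: "left_linear R"
    and terminating: "terminating_mod R B"
    and pcps_joinable: "PCP R \<union> PCPpm R (Bpm B) \<subseteq> join_mod R B"
begin

lemma vars_rhs_R: "(l, r) \<in> R \<Longrightarrow> vars_term r \<subseteq> vars_term l"
  using wf_R unfolding wf_trs_def by blast

lemma vars_rhs_Bpm: "(l, r) \<in> Bpm B \<Longrightarrow> vars_term r \<subseteq> vars_term l"
  using var_preserving_B unfolding var_preserving_def Bpm_def by auto

lemma root_step_R_join_mod:
  assumes "(l, r) \<in> R"
  shows "(l \<cdot> \<tau>, r \<cdot> \<tau>) \<in> join_mod R B"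
proof -
  have "(l \<cdot> \<tau>, r \<cdot> \<tau>) \<in> rstep R" using rstep_at_root[OF assms] rstep_iff_rstep_at by blast
  then show ?thesis using conv_refl rtrancl.rtrancl_refl by (blast intro: join_modI)
qed

lemma root_step_Bpm_join_mod:
  assumes "(l, r) \<in> Bpm B"
  shows "(l \<cdot> \<tau>, r \<cdot> \<tau>) \<in> join_mod R B"
proof -
  have "(l \<cdot> \<tau>, r \<cdot> \<tau>) \<in> rstep (Bpm B)" using rstep_at_root[OF assms] rstep_iff_rstep_at by blast
  then show ?thesis by (intro conv_imp_join_mod rstep_Bpm_imp_conv)
qed

lemma nested_peak_RR_join_mod:
  assumes "(w, t) \<in> rstep_at R (q @ p)" "(w, u) \<in> rstep_at R q"
    "proper_subterms_NF R (w |_ (q @ p))"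
  shows "(t, u) \<in> join_mod R B"
proof (rule nested_peak_joinable[OF infinite_vars assms vars_rhs_R])
  show "pcp_gen R R R \<subseteq> join_mod R B" using pcps_joinable by (simp add: PCP_def)
  show "(replace_at (l \<cdot> \<sigma>) p' v, r \<cdot> \<sigma>) \<in> join_mod R B"
    if "(l, r) \<in> R" "p' \<in> poss (l \<cdot> \<sigma>)" "p' \<notin> fun_poss l" "(l \<cdot> \<sigma> |_ p', v) \<in> rstep R"
    for l r \<sigma> p' v
    using root_step_R_join_mod[OF that(1)] that(2-4) by (rule variable_peak_inner_rstep_join_mod)
qed

lemma nested_peak_BR_join_mod:
  assumes "(w, u) \<in> rstep_at (Bpm B) (q @ p)" "(w, t) \<in> rstep_at R q"
    "proper_subterms_NF R (w |_ (q @ p))"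
  shows "(u, t) \<in> join_mod R B"
proof (rule nested_peak_joinable[OF infinite_vars assms vars_rhs_R])
  show "pcp_gen (Bpm B) R R \<subseteq> join_mod R B" using pcps_joinable by (simp add: PCPpm_def)
  show "(replace_at (l \<cdot> \<sigma>) p' v, r \<cdot> \<sigma>) \<in> join_mod R B"
    if "(l, r) \<in> R" "p' \<in> poss (l \<cdot> \<sigma>)" "p' \<notin> fun_poss l" "(l \<cdot> \<sigma> |_ p', v) \<in> rstep (Bpm B)"
    for l r \<sigma> p' v
    using that(1) left_linear_R that(2-4) unfolding left_linear_def
    by (blast intro: variable_peak_inner_Bpm_join_mod)
qed

lemma nested_peak_RB_join_mod:
  assumes "(w, t) \<in> rstep_at R (q @ p)" "(w, u) \<in> rstep_at (Bpm B) q"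
    "proper_subterms_NF R (w |_ (q @ p))"
  shows "(t, u) \<in> join_mod R B"
proof (rule nested_peak_joinable[OF infinite_vars assms vars_rhs_Bpm])
  show "pcp_gen R (Bpm B) R \<subseteq> join_mod R B" using pcps_joinable by (simp add: PCPpm_def)
  show "(replace_at (l \<cdot> \<sigma>) p' v, r \<cdot> \<sigma>) \<in> join_mod R B"
    if "(l, r) \<in> Bpm B" "p' \<in> poss (l \<cdot> \<sigma>)" "p' \<notin> fun_poss l" "(l \<cdot> \<sigma> |_ p', v) \<in> rstep R"
    for l r \<sigma> p' v
    using root_step_Bpm_join_mod[OF that(1)] that(2-4) by (rule variable_peak_inner_rstep_join_mod)
qed

end

locale unique_NF_below = pcp_joinable_mod +
  fixes s :: "('f, 'v) term"
  assumes unique_below: "\<And>v. (s, v) \<in> (relmod R B)\<^sup>+ \<Longrightarrow> unique_NF_mod R B v"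
begin

lemma NF_equiv_trans_below:
  "(s, u) \<in> (relmod R B)\<^sup>+ \<Longrightarrow> NF_equiv R B t u \<Longrightarrow> NF_equiv R B u v \<Longrightarrow> NF_equiv R B t v"
  using NF_equiv_trans unique_below by blast

lemma join_mod_NF_equiv_below:
  assumes "(s, t) \<in> (relmod R B)\<^sup>+" "(t, u) \<in> join_mod R B"
  shows "NF_equiv R B t u"
proof -
  from assms(2) obtain a b where ab: "(t, a) \<in> (rstep R)\<^sup>*" "(a, b) \<in> conv B" "(u, b) \<in> (rstep R)\<^sup>*"
    by (rule join_modE)
  with assms(1) have "unique_NF_mod R B a" by (blast intro: unique_below relmod_trancl_rsteps)
  with ab show ?thesis by (rule join_mod_imp_NF_equiv[OF terminating])
qed

text \<open>If u were a normal form, the join would lead from s back into its own B-class, which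
  termination modulo B excludes.\<close>
lemma join_mod_rstep_below:
  assumes w: "(s, w) \<in> conv B" and t: "(w, t) \<in> rstep R" and u: "(s, u) \<in> conv B"
    and tu: "(t, u) \<in> join_mod R B"
  obtains e where "(u, e) \<in> rstep R" "NF_equiv R B t e"
proof -
  have st: "(s, t) \<in> (relmod R B)\<^sup>+" using w t by (rule relmod_trancl_step)
  from tu obtain a b where ab: "(t, a) \<in> (rstep R)\<^sup>*" "(a, b) \<in> conv B" "(u, b) \<in> (rstep R)\<^sup>*"
    by (rule join_modE)
  from ab(3) show thesis
  proof (cases rule: converse_rtranclE)
    case base
    have "(s, b) \<in> (relmod R B)\<^sup>+"
      using relmod_trancl_rsteps[OF st ab(1)] ab(2) by (rule relmod_trancl_conv)
    with base u show thesis using relmod_trancl_not_conv[OF terminating] conv_sym by blast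
  next
    case (step e)
    with ab have "(t, e) \<in> join_mod R B" by (blast intro: join_modI)
    with step(1) show thesis by (blast intro: that join_mod_NF_equiv_below[OF st])
  qed
qed

definition peaks_resolved_below :: "('f, 'v) term \<Rightarrow> nat \<Rightarrow> bool" where
  "peaks_resolved_below w n \<longleftrightarrow>
    (\<forall>p1 p2 t u. peak_measure w p1 p2 < n \<longrightarrow> (w, t) \<in> rstep_at R p1 \<longrightarrow>
     ((w, u) \<in> rstep_at R p2 \<longrightarrow> NF_equiv R B t u) \<and>
     ((w, u) \<in> rstep_at (Bpm B) p2 \<longrightarrow> (\<exists>e. (u, e) \<in> rstep R \<and> NF_equiv R B t e)))"

lemma peaks_resolved_belowD:
  assumes "peaks_resolved_below w n" "peak_measure w p1 p2 < n" "(w, t) \<in> rstep_at R p1"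
  shows "(w, u) \<in> rstep_at R p2 \<Longrightarrow> NF_equiv R B t u"
    and "(w, u) \<in> rstep_at (Bpm B) p2 \<Longrightarrow> \<exists>e. (u, e) \<in> rstep R \<and> NF_equiv R B t e"
  using assms unfolding peaks_resolved_below_def by blast+

lemma relmod_trancl_rstep_at:
  "(s, w) \<in> conv B \<Longrightarrow> (w, t) \<in> rstep_at R p \<Longrightarrow> (s, t) \<in> (relmod R B)\<^sup>+"
  using relmod_trancl_step rstep_iff_rstep_at by blast

lemma parallel_peaks_NF_equiv:
  assumes w: "(s, w) \<in> conv B" and par: "parallel_pos p1 p2" and t: "(w, t) \<in> rstep_at R p1"
  shows "(w, u) \<in> rstep_at R p2 \<Longrightarrow> NF_equiv R B t u"
    and "(w, u) \<in> rstep_at (Bpm B) p2 \<Longrightarrow> \<exists>e. (u, e) \<in> rstep R \<and> NF_equiv R B t e"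
proof -
  have st: "(s, t) \<in> (relmod R B)\<^sup>+" using w t by (rule relmod_trancl_rstep_at)
  show "NF_equiv R B t u" if u: "(w, u) \<in> rstep_at R p2"
  proof -
    obtain v where "(t, v) \<in> rstep R" "(u, v) \<in> rstep R" by (rule parallel_peak_commute[OF t u par])
    then have "(t, u) \<in> join_mod R B" by (intro join_modI[of t v R v B u]) auto
    with st show ?thesis by (rule join_mod_NF_equiv_below)
  qed
  show "\<exists>e. (u, e) \<in> rstep R \<and> NF_equiv R B t e" if u: "(w, u) \<in> rstep_at (Bpm B) p2"
  proof -
    obtain v where "(t, v) \<in> rstep (Bpm B)" "(u, v) \<in> rstep R"
      by (rule parallel_peak_commute[OF t u par])
    moreover have "NF_equiv R B t v"
      using \<open>(t, v) \<in> rstep (Bpm B)\<close>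
      by (intro join_mod_NF_equiv_below[OF st] conv_imp_join_mod rstep_Bpm_imp_conv)
    ultimately show ?thesis by blast
  qed
qed

lemma nested_peaks_NF_equiv:
  assumes w: "(s, w) \<in> conv B" and IH: "peaks_resolved_below w (size (w |_ (q @ p)))"
  shows nested_peak_RR_NF_equiv: "(w, t) \<in> rstep_at R (q @ p) \<Longrightarrow> (w, u) \<in> rstep_at R q \<Longrightarrow>
      NF_equiv R B t u"
    and nested_peak_BR_NF_equiv: "(w, t) \<in> rstep_at R q \<Longrightarrow> (w, u) \<in> rstep_at (Bpm B) (q @ p) \<Longrightarrow>
      \<exists>e. (u, e) \<in> rstep R \<and> NF_equiv R B t e"
    and nested_peak_RB_NF_equiv: "(w, t) \<in> rstep_at R (q @ p) \<Longrightarrow> (w, u) \<in> rstep_at (Bpm B) q \<Longrightarrow>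
      \<exists>e. (u, e) \<in> rstep R \<and> NF_equiv R B t e"
proof -
  have below: "(s, t) \<in> (relmod R B)\<^sup>+" if "(w, t) \<in> rstep_at R p'" for t p'
    using w that by (rule relmod_trancl_rstep_at)
  have step: "(w, t) \<in> rstep R" if "(w, t) \<in> rstep_at R p'" for t p'
    using that rstep_iff_rstep_at by blast
  have u_conv: "(s, u) \<in> conv B" if "(w, u) \<in> rstep_at (Bpm B) p'" for u p'
    using w that rstep_Bpm_imp_conv rstep_iff_rstep_at conv_trans by blast
  have smaller: "\<exists>r w'. (w, w') \<in> rstep_at R (q @ p @ r) \<and>
      size (w |_ (q @ p @ r)) < size (w |_ (q @ p))"
    if "q @ p \<in> poss w" "\<not> proper_subterms_NF R (w |_ (q @ p))"
    using non_prime_redex_step[OF that] by (metis append.assoc)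
  have measure: "peak_measure w (q @ p) (q @ p @ r) = size (w |_ (q @ p @ r))"
    "peak_measure w q (q @ p @ r) = size (w |_ (q @ p @ r))"
    "peak_measure w (q @ p @ r) (q @ p) = size (w |_ (q @ p @ r))"
    "peak_measure w (q @ p @ r) q = size (w |_ (q @ p @ r))" for r
    using peak_measure_below[of w "q @ p" r] peak_measure_below[of w q "p @ r"]
      peak_measure_above[of w "q @ p" r] peak_measure_above[of w q "p @ r"] by simp_all
  show "NF_equiv R B t u" if t: "(w, t) \<in> rstep_at R (q @ p)" and u: "(w, u) \<in> rstep_at R q"
  proof (cases "proper_subterms_NF R (w |_ (q @ p))")
    case True
    with t u have "(t, u) \<in> join_mod R B" by (rule nested_peak_RR_join_mod)
    with below[OF t] show ?thesis by (rule join_mod_NF_equiv_below)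
  next
    case False
    with smaller rstep_at_imp_poss[OF t] obtain r w' where w': "(w, w') \<in> rstep_at R (q @ p @ r)"
      and size: "size (w |_ (q @ p @ r)) < size (w |_ (q @ p))"
      by blast
    have "NF_equiv R B t w'"
      using peaks_resolved_belowD(1)[OF IH _ t w'] size by (simp add: measure)
    moreover have "NF_equiv R B u w'"
      using peaks_resolved_belowD(1)[OF IH _ u w'] size by (simp add: measure)
    ultimately show ?thesis
      using NF_equiv_trans_below[OF below[OF w']] NF_equiv_sym by blast
  qed
  show "\<exists>e. (u, e) \<in> rstep R \<and> NF_equiv R B t e"
    if t: "(w, t) \<in> rstep_at R q" and u: "(w, u) \<in> rstep_at (Bpm B) (q @ p)"
  proof (cases "proper_subterms_NF R (w |_ (q @ p))")
    case True
    with u t have "(u, t) \<in> join_mod R B" by (rule nested_peak_BR_join_mod)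
    then obtain e where "(u, e) \<in> rstep R" "NF_equiv R B t e"
      using join_mod_rstep_below[OF w step[OF t] u_conv[OF u]] join_mod_sym by blast
    then show ?thesis by blast
  next
    case False
    with smaller rstep_at_imp_poss[OF u] obtain r w' where w': "(w, w') \<in> rstep_at R (q @ p @ r)"
      and size: "size (w |_ (q @ p @ r)) < size (w |_ (q @ p))"
      by blast
    have "NF_equiv R B t w'"
      using peaks_resolved_belowD(1)[OF IH _ t w'] size by (simp add: measure)
    moreover obtain e where "(u, e) \<in> rstep R" "NF_equiv R B w' e"
      using peaks_resolved_belowD(2)[OF IH _ w' u] size by (auto simp: measure)
    ultimately show ?thesis using NF_equiv_trans_below[OF below[OF w']] by blast
  qed
  show "\<exists>e. (u, e) \<in> rstep R \<and> NF_equiv R B t e"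
    if t: "(w, t) \<in> rstep_at R (q @ p)" and u: "(w, u) \<in> rstep_at (Bpm B) q"
  proof (cases "proper_subterms_NF R (w |_ (q @ p))")
    case True
    with t u have "(t, u) \<in> join_mod R B" by (rule nested_peak_RB_join_mod)
    then obtain e where "(u, e) \<in> rstep R" "NF_equiv R B t e"
      by (rule join_mod_rstep_below[OF w step[OF t] u_conv[OF u]])
    then show ?thesis by blast
  next
    case False
    with smaller rstep_at_imp_poss[OF t] obtain r w' where w': "(w, w') \<in> rstep_at R (q @ p @ r)"
      and size: "size (w |_ (q @ p @ r)) < size (w |_ (q @ p))"
      by blast
    have "NF_equiv R B t w'"
      using peaks_resolved_belowD(1)[OF IH _ t w'] size by (simp add: measure)
    moreover obtain e where "(u, e) \<in> rstep R" "NF_equiv R B w' e"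
      using peaks_resolved_belowD(2)[OF IH _ w' u] size by (auto simp: measure)
    ultimately show ?thesis using NF_equiv_trans_below[OF below[OF w']] by blast
  qed
qed

lemma peaks_resolved:
  assumes w: "(s, w) \<in> conv B"
  shows "peaks_resolved_below w n"
proof (induction n)
  case 0
  then show ?case by (simp add: peaks_resolved_below_def)
next
  case (Suc n)
  have "((w, u) \<in> rstep_at R p2 \<longrightarrow> NF_equiv R B t u) \<and>
      ((w, u) \<in> rstep_at (Bpm B) p2 \<longrightarrow> (\<exists>e. (u, e) \<in> rstep R \<and> NF_equiv R B t e))"
    if m: "peak_measure w p1 p2 < Suc n" and t: "(w, t) \<in> rstep_at R p1" for p1 p2 t u
  proof (cases "peak_measure w p1 p2 < n")
    case True
    with Suc.IH t show ?thesis using peaks_resolved_belowD by blast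
  next
    case False
    with m have n: "n = peak_measure w p1 p2" by simp
    consider "parallel_pos p1 p2" | r where "p2 = p1 @ r" | r where "p1 = p2 @ r"
      unfolding parallel_pos_def by blast
    then show ?thesis
    proof cases
      case 1
      with w t show ?thesis using parallel_peaks_NF_equiv by blast
    next
      case (2 r)
      with Suc.IH n have IH: "peaks_resolved_below w (size (w |_ (p1 @ r)))"
        by (simp add: peak_measure_below)
      show ?thesis
        using nested_peak_RR_NF_equiv[OF w IH _ t] nested_peak_BR_NF_equiv[OF w IH t]
          NF_equiv_sym 2 by blast
    next
      case (3 r)
      with Suc.IH n have IH: "peaks_resolved_below w (size (w |_ (p2 @ r)))"
        by (simp add: peak_measure_above)
      show ?thesis
        using nested_peak_RR_NF_equiv[OF w IH] nested_peak_RB_NF_equiv[OF w IH] t 3 by blast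
    qed
  qed
  then show ?case unfolding peaks_resolved_below_def by blast
qed

lemma local_peak:
  assumes "(s, w) \<in> conv B" "(w, t) \<in> rstep R"
  shows local_peak_R: "(w, u) \<in> rstep R \<Longrightarrow> NF_equiv R B t u"
    and local_peak_Bpm: "(w, u) \<in> rstep (Bpm B) \<Longrightarrow> \<exists>e. (u, e) \<in> rstep R \<and> NF_equiv R B t e"
proof -
  obtain p1 where t: "(w, t) \<in> rstep_at R p1" using assms(2) rstep_iff_rstep_at by blast
  have ok: "peaks_resolved_below w (Suc (peak_measure w p1 p2))" for p2
    using assms(1) by (rule peaks_resolved)
  show "NF_equiv R B t u" if "(w, u) \<in> rstep R"
    using that peaks_resolved_belowD(1)[OF ok _ t] rstep_iff_rstep_at by blast
  show "\<exists>e. (u, e) \<in> rstep R \<and> NF_equiv R B t e" if "(w, u) \<in> rstep (Bpm B)"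
    using that peaks_resolved_belowD(2)[OF ok _ t] rstep_iff_rstep_at by blast
qed

lemma rstep_coherent_conv:
  assumes v: "(s, v) \<in> conv B" and a: "(v, a) \<in> rstep R" and vv': "(v, v') \<in> conv B"
  obtains a' where "(v', a') \<in> rstep R" "NF_equiv R B a a'"
proof -
  from vv' have "\<exists>a'. (v', a') \<in> rstep R \<and> NF_equiv R B a a'"
    unfolding conv_eq_rtrancl_rstep_Bpm
  proof induction
    case base
    with a show ?case using NF_equiv_refl[OF terminating] by blast
  next
    case (step y z)
    then obtain ay where ay: "(y, ay) \<in> rstep R" "NF_equiv R B a ay" by blast
    have sy: "(s, y) \<in> conv B"
      using v step(1) conv_trans unfolding conv_eq_rtrancl_rstep_Bpm by blast
    obtain e where "(z, e) \<in> rstep R" "NF_equiv R B ay e"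
      using local_peak_Bpm[OF sy ay(1) step(2)] by blast
    moreover have "(s, ay) \<in> (relmod R B)\<^sup>+" using sy ay(1) by (rule relmod_trancl_step)
    ultimately show ?case using NF_equiv_trans_below ay(2) by blast
  qed
  with that show thesis by blast
qed

lemma unique_NF_mod_self: "unique_NF_mod R B s"
  unfolding unique_NF_mod_def
proof (intro allI impI)
  fix s' n n'
  assume ss': "(s, s') \<in> conv B" and sn: "(s, n) \<in> (rstep R)\<^sup>*" and n: "NF R n"
    and sn': "(s', n') \<in> (rstep R)\<^sup>*" and n': "NF R n'"
  from sn show "(n, n') \<in> conv B"
  proof (cases rule: converse_rtranclE)
    case base
    have "NF R s'"
    proof (rule ccontr)
      assume "\<not> NF R s'"
      then obtain a where "(s', a) \<in> rstep R" unfolding NF_def by blast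
      from rstep_coherent_conv[OF ss' this conv_sym[OF ss']] obtain a' where "(s, a') \<in> rstep R" .
      with n base show False unfolding NF_def by blast
    qed
    from sn' have "s' = n'"
      by (cases rule: converse_rtranclE) (use \<open>NF R s'\<close> in \<open>auto simp: NF_def\<close>)
    with base ss' show ?thesis by simp
  next
    case (step a)
    obtain a' where a': "(s', a') \<in> rstep R" "NF_equiv R B a a'"
      using rstep_coherent_conv[OF conv_refl step(1) ss'] .
    from sn' obtain b where b: "(s', b) \<in> rstep R" "(b, n') \<in> (rstep R)\<^sup>*"
      by (cases rule: converse_rtranclE) (use a'(1) n' in \<open>auto simp: NF_def\<close>)
    have "NF_equiv R B a' b" using local_peak_R[OF ss' a'(1) b(1)] .
    with a'(2) have "NF_equiv R B a b"
      by (rule NF_equiv_trans_below[OF relmod_trancl_step[OF ss' a'(1)]])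
    then obtain na nb where nab: "(a, na) \<in> (rstep R)\<^sup>*" "NF R na" "(b, nb) \<in> (rstep R)\<^sup>*"
      "NF R nb" "(na, nb) \<in> conv B"
      unfolding NF_equiv_def by blast
    have "(n, na) \<in> conv B"
      using unique_below[OF relmod_trancl_step[OF conv_refl step(1)]] conv_refl step(2) n nab(1,2)
      by (rule unique_NF_modD)
    moreover have "(nb, n') \<in> conv B"
      using unique_below[OF relmod_trancl_step[OF ss' b(1)]] conv_refl nab(3,4) b(2) n'
      by (rule unique_NF_modD)
    ultimately show ?thesis using nab(5) by (blast intro: conv_trans)
  qed
qed

end

lemma (in pcp_joinable_mod) unique_NF_mod: "unique_NF_mod R B s"
proof (induction s rule: wf_induct[OF wf_relmod_trancl[OF terminating]])
  case (1 s)
  interpret unique_NF_below R B s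
    using 1 by unfold_locales auto
  show ?case by (rule unique_NF_mod_self)
qed

lemma peaks_subset_conv:
  assumes "rstep E1 \<subseteq> conv E" "rstep E2 \<subseteq> conv E"
  shows "(rstep E1)\<inverse> O rstep E2 \<subseteq> conv E"
proof (rule subrelI)
  fix x z assume "(x, z) \<in> (rstep E1)\<inverse> O rstep E2"
  then obtain y where "(y, x) \<in> rstep E1" "(y, z) \<in> rstep E2" by blast
  with assms show "(x, z) \<in> conv E" by (meson conv_sym conv_trans subsetD)
qed

lemma CR_mod_imp_pcps_join_mod:
  assumes "CR_mod R B"
  shows "PCP R \<union> PCPpm R (Bpm B) \<subseteq> join_mod R B"
proof -
  have R: "rstep R \<subseteq> conv (R \<union> B)" and B: "rstep (Bpm B) \<subseteq> conv (R \<union> B)"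
    unfolding conv_def rstep_Bpm rstep_union by auto
  have "PCP R \<union> PCPpm R (Bpm B) \<subseteq> conv (R \<union> B)"
    unfolding PCP_def PCPpm_def
    using pcp_gen_subset_peaks peaks_subset_conv[OF R R] peaks_subset_conv[OF R B]
      peaks_subset_conv[OF B R] by blast
  with assms show ?thesis unfolding CR_mod_def by blast
qed

theorem theorem3p16:
  fixes R B :: "('f, 'v) rule set"
  assumes "infinite (UNIV :: 'v set)"
    and "wf_trs R"
    and "var_preserving B"
    and "left_linear R"
    and "terminating_mod R B"
  shows "CR_mod R B \<longleftrightarrow> PCP R \<union> PCPpm R (Bpm B) \<subseteq> join_mod R B"
proof
  show "CR_mod R B \<Longrightarrow> PCP R \<union> PCPpm R (Bpm B) \<subseteq> join_mod R B"
    by (rule CR_mod_imp_pcps_join_mod)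
next
  assume "PCP R \<union> PCPpm R (Bpm B) \<subseteq> join_mod R B"
  with assms interpret pcp_joinable_mod R B by unfold_locales
  show "CR_mod R B" using assms(5) unique_NF_mod by (rule CR_mod_if_unique_NF_mod)
qed

end
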